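(* For $i = 1, \ldots, m-1$ the following hold. (a) $\mathcal{Q}_{i}^{\mathbb{B}}(\lambda \mathcal{D}_{i})\mathcal{R}_{i} = \lambda \mathcal{D}_{i+1} + \mathcal{T}_{i}$, and $\mathcal{Q}_{i}^{\mathbb{B}}(\mathbb{M}_{m-(i+1)}\mathbb{M}_{m-i})\mathcal{R}_{i} = \mathbb{M}_{m-(i+1)} + \mathcal{T}_{i}$. (b) $\mathcal{R}_{i}^{\mathbb{B}}(\lambda \mathcal{D}_{i})\mathcal{Q}_{i} = \lambda \mathcal{D}_{i+1} + \mathcal{T}_{i}^{\mathbb{B}}$, and $\mathcal{R}_{i}^{\mathbb{B}}(\mathbb{M}_{m-i}\mathbb{M}_{m-(i+1)})\mathcal{Q}_{i} = \mathbb{M}_{m-(i+1)} + \mathcal{T}_{i}^{\mathbb{B}}$. (c) $\mathcal{T}_{i}\mathbb{M}_{j} = \mathbb{M}_{j}\mathcal{T}_{i} = \mathcal{T}_{i}$ and $\mathcal{T}_{i}^{\mathbb{B}}\mathbb{M}_{j} = \mathbb{M}_{j}\mathcal{T}_{i}^{\mathbb{B}} = \mathcal{T}_{i}^{\mathbb{B}}$ for all $j \leq m-i-2$.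
   Context: Let $P(\lambda) = \sum_{j=0}^m \lambda^j A_j$ ($A_j\in\mathbb{C}^{n\times n}$, $A_m\ne 0$) and $\mathcal{S}(\lambda) = \left[\begin{array}{c|c} P(\lambda) & C \\ \hline B & A-\lambda E\end{array}\right]$ with $A,E\in\mathbb{C}^{r\times r}$, $B\in\mathbb{C}^{r\times n}$, $C\in\mathbb{C}^{n\times r}$. Fiedler matrices: $M_0=\mathrm{diag}(I_{(m-1)n},-A_0)$, $M_m = \mathrm{diag}(A_m,I_{(m-1)n})$, $M_i=\mathrm{diag}\left(I_{(m-i-1)n},\left[\begin{smallmatrix}-A_i & I_n\\ I_n & 0\end{smallmatrix}\right],I_{(i-1)n}\right)$ for $1\le i\le m-1$; $\mathbb{M}_0 = \left[\begin{array}{c|c} M_0 & -e_m\otimes C\\ \hline -e_m^T\otimes B & -A\end{array}\right]$ ($e_m$ the $m$-th column of $I_m$), $\mathbb{M}_m=\mathrm{diag}(M_m,-E)$, $\mathbb{M}_i=\mathrm{diag}(M_i,I_r)$. Horner shifts: $P_k(\lambda) = A_{m-k}+\lambda A_{m-k+1}+\cdots+\lambda^k A_m$, $k=0,\ldots,m$. For $1\le i\le m-1$ define $nm\times nm$ matrix polynomials $Q_i = \mathrm{diag}\left(I_{(i-1)n},\left[\begin{smallmatrix} I_n & \lambda I_n\\ 0_n & I_n\end{smallmatrix}\right], I_{(m-i-1)n}\right)$, $R_i = \mathrm{diag}\left(I_{(i-1)n},\left[\begin{smallmatrix} 0_n & I_n\\ I_n & P_i(\lambda)\end{smallmatrix}\right],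 I_{(m-i-1)n}\right)$, $T_i = \mathrm{diag}\left(0_{(i-1)n},\left[\begin{smallmatrix} 0_n & \lambda P_{i-1}(\lambda)\\ \lambda I_n & \lambda^2 P_{i-1}(\lambda)\end{smallmatrix}\right], 0_{(m-i-1)n}\right)$, $D_i = \mathrm{diag}(0_{(i-1)n}, P_{i-1}(\lambda), I_{(m-i)n})$, and $D_m = \mathrm{diag}(0_{(m-1)n}, P_{m-1}(\lambda))$. The $(nm+r)\times(nm+r)$ auxiliary system polynomials are $\mathcal{Q}_i = \mathrm{diag}(Q_i, I_r)$, $\mathcal{R}_i=\mathrm{diag}(R_i,I_r)$, $\mathcal{T}_i=\mathrm{diag}(T_i,0_r)$, $\mathcal{D}_i=\mathrm{diag}(D_i,-E)$ ($1\le i\le m$). For a block matrix $H=(H_{ij})$ with $n\times n$ blocks, the block transpose $H^{\mathcal{B}}$ has $(H^{\mathcal{B}})_{ij}=H_{ji}$; for a system matrix $\mathcal{A}=\left[\begin{array}{c|c} A & e_i\otimes X\\ \hline e_j^T\otimes Y & Z\end{array}\right]$ its block transpose is $\mathcal{A}^{\mathbb{B}}=\left[\begin{array}{c|c} A^{\mathcal{B}} & e_j\otimes X\\ \hline e_i^T\otimes Y & Z\end{array}\right]$; in particular $\mathcal{Q}_i^{\mathbb{B}} = \mathrm{diag}(Q_i^{\mathcal{B}}, I_r)$, $\mathcal{R}_i^{\mathbb{B}}=\mathcal{R}_i$, $\mathcal{T}_i^{\mathbb{B}} = \mathrm{diag}(T_i^{\mathcal{B}},0_r)$. *)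

theory Defs
  imports "Jordan_Normal_Form.Matrix" "HOL-Computational_Algebra.Polynomial"
begin

text \<open>Matrix polynomials are represented as matrices with entries in complex poly.
  Block indices are 1-based as in the paper; the n x n blocks of an nm x nm matrix.\<close>

definition lam :: "complex poly" where "lam = [:0, 1:]"

definition cmat :: "complex mat \<Rightarrow> complex poly mat" where
  "cmat X = map_mat (\<lambda>c. [:c:]) X"

text \<open>Horner shift P_k(lambda) = A_{m-k} + lambda A_{m-k+1} + ... + lambda^k A_m.\<close>
definition horner :: "nat \<Rightarrow> nat \<Rightarrow> (nat \<Rightarrow> complex mat) \<Rightarrow> nat \<Rightarrow> complex poly mat" where
  "horner n m A k = mat n n (\<lambda>(a,b). \<Sum>j=0..k. monom (A (m - k + j) $$ (a,b)) j)"

definition blk :: "nat \<Rightarrow> nat \<Rightarrow> (nat \<Rightarrow> nat \<Rightarrow> 'a mat) \<Rightarrow> 'a mat" where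
  "blk n m f = mat (n*m) (n*m) (\<lambda>(a,b). f (a div n + 1) (b div n + 1) $$ (a mod n, b mod n))"

definition block_transpose :: "nat \<Rightarrow> nat \<Rightarrow> 'a mat \<Rightarrow> 'a mat" where
  "block_transpose n m H = mat (n*m) (n*m)
     (\<lambda>(a,b). H $$ ((b div n) * n + a mod n, (a div n) * n + b mod n))"

text \<open>Block transpose of a system matrix [H | e_i (x) X; e_j^T (x) Y | Z] in the case X = 0,
  Y = 0, i.e. of diag(H, Z): it is diag(H^B, Z).\<close>
definition sys_bt_diag :: "nat \<Rightarrow> nat \<Rightarrow> nat \<Rightarrow> 'a::zero mat \<Rightarrow> 'a mat \<Rightarrow> 'a mat" where
  "sys_bt_diag n m r H Z = four_block_mat (block_transpose n m H) (0\<^sub>m (n*m) r) (0\<^sub>m r (n*m)) Z"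

definition Qm :: "nat \<Rightarrow> nat \<Rightarrow> nat \<Rightarrow> complex poly mat" where
  "Qm n m i = blk n m (\<lambda>p q. if p = q then 1\<^sub>m n
      else if p = i \<and> q = i + 1 then lam \<cdot>\<^sub>m 1\<^sub>m n else 0\<^sub>m n n)"

definition Rm :: "nat \<Rightarrow> nat \<Rightarrow> (nat \<Rightarrow> complex mat) \<Rightarrow> nat \<Rightarrow> complex poly mat" where
  "Rm n m A i = blk n m (\<lambda>p q.
      if p = i \<and> q = i then 0\<^sub>m n n
      else if p = i \<and> q = i + 1 then 1\<^sub>m n
      else if p = i + 1 \<and> q = i then 1\<^sub>m n
      else if p = i + 1 \<and> q = i + 1 then horner n m A i
      else if p = q then 1\<^sub>m n else 0\<^sub>m n n)"

definition Tm :: "nat \<Rightarrow> nat \<Rightarrow> (nat \<Rightarrow> complex mat) \<Rightarrow> nat \<Rightarrow> complex poly mat" where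
  "Tm n m A i = blk n m (\<lambda>p q.
      if p = i \<and> q = i + 1 then lam \<cdot>\<^sub>m horner n m A (i - 1)
      else if p = i + 1 \<and> q = i then lam \<cdot>\<^sub>m 1\<^sub>m n
      else if p = i + 1 \<and> q = i + 1 then (lam ^ 2) \<cdot>\<^sub>m horner n m A (i - 1)
      else 0\<^sub>m n n)"

definition Dm :: "nat \<Rightarrow> nat \<Rightarrow> (nat \<Rightarrow> complex mat) \<Rightarrow> nat \<Rightarrow> complex poly mat" where
  "Dm n m A i = blk n m (\<lambda>p q.
      if p \<noteq> q then 0\<^sub>m n n
      else if p < i then 0\<^sub>m n n
      else if p = i then horner n m A (i - 1)
      else 1\<^sub>m n)"

definition fiedler :: "nat \<Rightarrow> nat \<Rightarrow> (nat \<Rightarrow> complex mat) \<Rightarrow> nat \<Rightarrow> complex mat" where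
  "fiedler n m A k =
    (if k = 0 then blk n m (\<lambda>p q. if p \<noteq> q then 0\<^sub>m n n
                               else if p = m then - A 0 else 1\<^sub>m n)
     else if k = m then blk n m (\<lambda>p q. if p \<noteq> q then 0\<^sub>m n n
                               else if p = 1 then A m else 1\<^sub>m n)
     else blk n m (\<lambda>p q.
        if p = m - k \<and> q = m - k then - A k
        else if p = m - k \<and> q = m - k + 1 then 1\<^sub>m n
        else if p = m - k + 1 \<and> q = m - k then 1\<^sub>m n
        else if p = m - k + 1 \<and> q = m - k + 1 then 0\<^sub>m n n
        else if p = q then 1\<^sub>m n else 0\<^sub>m n n))"

definition em_col :: "nat \<Rightarrow> nat \<Rightarrow> nat \<Rightarrow> complex mat \<Rightarrow> complex mat" where
  "em_col n m r C = mat (n*m) r (\<lambda>(a,b). if a div n + 1 = m then C $$ (a mod n, b) else 0)"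

definition em_row :: "nat \<Rightarrow> nat \<Rightarrow> nat \<Rightarrow> complex mat \<Rightarrow> complex mat" where
  "em_row n m r B = mat r (n*m) (\<lambda>(a,b). if b div n + 1 = m then B $$ (a, b mod n) else 0)"

definition sys_fiedler :: "nat \<Rightarrow> nat \<Rightarrow> nat \<Rightarrow> (nat \<Rightarrow> complex mat) \<Rightarrow> complex mat \<Rightarrow> complex mat
    \<Rightarrow> complex mat \<Rightarrow> complex mat \<Rightarrow> nat \<Rightarrow> complex poly mat" where
  "sys_fiedler n m r A Amat E B C k = cmat
    (if k = 0 then four_block_mat (fiedler n m A 0) (- em_col n m r C) (- em_row n m r B) (- Amat)
     else if k = m then four_block_mat (fiedler n m A m) (0\<^sub>m (n*m) r) (0\<^sub>m r (n*m)) (- E)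
     else four_block_mat (fiedler n m A k) (0\<^sub>m (n*m) r) (0\<^sub>m r (n*m)) (1\<^sub>m r))"

definition diag2 :: "nat \<Rightarrow> nat \<Rightarrow> 'a::zero mat \<Rightarrow> 'a mat \<Rightarrow> 'a mat" where
  "diag2 N r H Z = four_block_mat H (0\<^sub>m N r) (0\<^sub>m r N) Z"

definition Qcal where "Qcal n m r i = diag2 (n*m) r (Qm n m i) (1\<^sub>m r)"
definition Rcal where "Rcal n m r A i = diag2 (n*m) r (Rm n m A i) (1\<^sub>m r)"
definition Tcal where "Tcal n m r A i = diag2 (n*m) r (Tm n m A i) (0\<^sub>m r r)"
definition Dcal where "Dcal n m r A E i = diag2 (n*m) r (Dm n m A i) (- cmat E)"

definition QcalB where "QcalB n m r i = sys_bt_diag n m r (Qm n m i) (1\<^sub>m r)"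
definition RcalB where "RcalB n m r A i = sys_bt_diag n m r (Rm n m A i) (1\<^sub>m r)"
definition TcalB where "TcalB n m r A i = sys_bt_diag n m r (Tm n m A i) (0\<^sub>m r r)"

end

theory Submission
  imports Defs
begin

text \<open>All matrices involved are block matrices with n \<times> n blocks that agree with the identity
  (or with zero) outside a few blocks around block index i (for Q_i, R_i, T_i, D_i) or m - k (for M_k).
  Hence every block of a product of two of them is a sum of at most two nonzero block products, and
  each identity reduces to a computation in the nontrivial corner, whose only non-formal input is
  the Horner recursion P_i = A_(m-i) + \<lambda> P_(i-1). On the system level the auxiliary matrices are
  block diagonal; the coupling blocks -e_m \<otimes> C and -e_m^T \<otimes> B of M_0 live in block row and
  column m, which Q_i and M_1 R_(m-1) leave unchanged and which T_i does not meet when i + 2 \<le> m.\<close>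

section \<open>Block matrices\<close>

lemma sum_lessThan_mult_split:
  fixes g :: "nat \<Rightarrow> 'a::comm_monoid_add"
  shows "(\<Sum>k<n*m. g k) = (\<Sum>s<m. \<Sum>t<n. g (s*n+t))"
proof (induct m)
  case (Suc m)
  have "{..<n*Suc m} = {..<n*m} \<union> {n*m..<n*m+n}" by auto
  moreover have "(\<Sum>k\<in>{n*m..<n*m+n}. g k) = (\<Sum>t<n. g (m*n+t))"
    by (rule sum.reindex_bij_witness[of _ "\<lambda>t. m*n+t" "\<lambda>k. k - m*n"]) (auto simp: mult.commute)
  moreover have "sum g ({..<n*m} \<union> {n*m..<n*m+n}) = sum g {..<n*m} + sum g {n*m..<n*m+n}"
    by (rule sum.union_disjoint) auto
  ultimately show ?case using Suc by (simp add: algebra_simps)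
qed simp

lemma div_less_of_less_mult: "(x::nat) < n*m \<Longrightarrow> x div n < m"
  by (simp add: less_mult_imp_div_less mult.commute)

lemma mod_less_of_less_mult: "(x::nat) < n*m \<Longrightarrow> x mod n < n"
  by (cases "n = 0") auto

definition block_mat :: "nat \<Rightarrow> nat \<Rightarrow> nat \<Rightarrow> nat \<Rightarrow> (nat \<Rightarrow> nat \<Rightarrow> 'a mat) \<Rightarrow> 'a mat" where
  "block_mat a b m1 m2 f =
     mat (a*m1) (b*m2) (\<lambda>(x,y). f (x div a + 1) (y div b + 1) $$ (x mod a, y mod b))"

lemma blk_eq_block_mat: "blk n m f = block_mat n n m m f"
  by (simp add: blk_def block_mat_def)

lemma block_mat_carrier[simp]:
  "block_mat a b m1 m2 f \<in> carrier_mat (a*m1) (b*m2)"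
  "dim_row (block_mat a b m1 m2 f) = a*m1" "dim_col (block_mat a b m1 m2 f) = b*m2"
  by (auto simp: block_mat_def)

lemma index_block_mat:
  "x < a*m1 \<Longrightarrow> y < b*m2 \<Longrightarrow>
   block_mat a b m1 m2 f $$ (x,y) = f (x div a + 1) (y div b + 1) $$ (x mod a, y mod b)"
  by (simp add: block_mat_def)

lemma block_mat_cong:
  assumes "\<And>p q. 1 \<le> p \<Longrightarrow> p \<le> m1 \<Longrightarrow> 1 \<le> q \<Longrightarrow> q \<le> m2 \<Longrightarrow> f p q = g p q"
  shows "block_mat a b m1 m2 f = block_mat a b m1 m2 g"
proof (rule eq_matI)
  fix x y assume "x < dim_row (block_mat a b m1 m2 g)" "y < dim_col (block_mat a b m1 m2 g)"
  then have xy: "x < a*m1" "y < b*m2" by auto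
  then show "block_mat a b m1 m2 f $$ (x,y) = block_mat a b m1 m2 g $$ (x,y)"
    using assms div_less_of_less_mult[OF xy(1)] div_less_of_less_mult[OF xy(2)]
    by (simp add: index_block_mat)
qed auto

lemma block_mat_eqI:
  assumes "\<And>p q u v. 1 \<le> p \<Longrightarrow> p \<le> m1 \<Longrightarrow> 1 \<le> q \<Longrightarrow> q \<le> m2 \<Longrightarrow> u < a \<Longrightarrow> v < b \<Longrightarrow>
      f p q $$ (u,v) = g p q $$ (u,v)"
  shows "block_mat a b m1 m2 f = block_mat a b m1 m2 g"
proof (rule eq_matI)
  fix x y assume "x < dim_row (block_mat a b m1 m2 g)" "y < dim_col (block_mat a b m1 m2 g)"
  then have xy: "x < a*m1" "y < b*m2" by auto
  then show "block_mat a b m1 m2 f $$ (x,y) = block_mat a b m1 m2 g $$ (x,y)"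
    using assms div_less_of_less_mult[OF xy(1)] div_less_of_less_mult[OF xy(2)]
      mod_less_of_less_mult[OF xy(1)] mod_less_of_less_mult[OF xy(2)]
    by (simp add: index_block_mat)
qed auto

definition sparse_block_prod ::
    "(nat \<Rightarrow> nat \<Rightarrow> 'a::semiring_0 mat) \<Rightarrow> (nat \<Rightarrow> nat \<Rightarrow> 'a mat) \<Rightarrow>
     (nat \<Rightarrow> nat \<Rightarrow> nat) \<Rightarrow> (nat \<Rightarrow> nat \<Rightarrow> nat) \<Rightarrow> nat \<Rightarrow> nat \<Rightarrow> 'a mat" where
  "sparse_block_prod f g c1 c2 =
     (\<lambda>p q. f p (c1 p q) * g (c1 p q) q + f p (c2 p q) * g (c2 p q) q)"

lemma sparse_block_prod_carrier:
  assumes "\<And>p q. f p q \<in> carrier_mat a b" "\<And>p q. g p q \<in> carrier_mat b c"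
  shows "sparse_block_prod f g c1 c2 p q \<in> carrier_mat a c"
  unfolding sparse_block_prod_def using assms by (intro add_carrier_mat mult_carrier_mat) auto

lemma sparse_block_prod_dims[simp]:
  "dim_row (sparse_block_prod f g c1 c2 p q) = dim_row (f p (c2 p q))"
  "dim_col (sparse_block_prod f g c1 c2 p q) = dim_col (g (c2 p q) q)"
  by (simp_all add: sparse_block_prod_def)

lemma mult_block_mat_sparse:
  fixes f g :: "nat \<Rightarrow> nat \<Rightarrow> 'a::comm_ring_1 mat"
  assumes cf: "\<And>p q. 1 \<le> p \<Longrightarrow> p \<le> m1 \<Longrightarrow> 1 \<le> q \<Longrightarrow> q \<le> m2 \<Longrightarrow> f p q \<in> carrier_mat a b"
    and cg: "\<And>p q. 1 \<le> p \<Longrightarrow> p \<le> m2 \<Longrightarrow> 1 \<le> q \<Longrightarrow> q \<le> m3 \<Longrightarrow> g p q \<in> carrier_mat b c"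
    and cc: "\<And>p q. 1 \<le> p \<Longrightarrow> p \<le> m1 \<Longrightarrow> 1 \<le> q \<Longrightarrow> q \<le> m3 \<Longrightarrow>
      1 \<le> c1 p q \<and> c1 p q \<le> m2 \<and> 1 \<le> c2 p q \<and> c2 p q \<le> m2 \<and> c1 p q \<noteq> c2 p q"
    and z: "\<And>p q s. 1 \<le> p \<Longrightarrow> p \<le> m1 \<Longrightarrow> 1 \<le> q \<Longrightarrow> q \<le> m3 \<Longrightarrow> 1 \<le> s \<Longrightarrow> s \<le> m2 \<Longrightarrow>
      s \<noteq> c1 p q \<Longrightarrow> s \<noteq> c2 p q \<Longrightarrow> f p s * g s q = 0\<^sub>m a c"
  shows "block_mat a b m1 m2 f * block_mat b c m2 m3 g
    = block_mat a c m1 m3 (sparse_block_prod f g c1 c2)"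
proof (rule eq_matI)
  fix x0 y0 assume "x0 < dim_row (block_mat a c m1 m3 (sparse_block_prod f g c1 c2))"
    "y0 < dim_col (block_mat a c m1 m3 (sparse_block_prod f g c1 c2))"
  then have xy0: "x0 < a*m1" "y0 < c*m3" by auto
  define p where "p = x0 div a + 1"
  define q where "q = y0 div c + 1"
  define x where "x = x0 mod a"
  define y where "y = y0 mod c"
  have pq: "1 \<le> p" "p \<le> m1" "1 \<le> q" "q \<le> m3" "x < a" "y < c"
    using div_less_of_less_mult[OF xy0(1)] div_less_of_less_mult[OF xy0(2)]
      mod_less_of_less_mult[OF xy0(1)] mod_less_of_less_mult[OF xy0(2)]
    by (auto simp: p_def q_def x_def y_def)
  have "(block_mat a b m1 m2 f * block_mat b c m2 m3 g) $$ (x0,y0)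
      = (\<Sum>k<b*m2. block_mat a b m1 m2 f $$ (x0,k) * block_mat b c m2 m3 g $$ (k,y0))"
    using xy0 by (simp add: scalar_prod_def lessThan_atLeast0)
  also have "\<dots> = (\<Sum>s<m2. \<Sum>t<b. f p (s+1) $$ (x,t) * g (s+1) q $$ (t,y))"
    unfolding sum_lessThan_mult_split
  proof (intro sum.cong refl)
    fix s t assume "s \<in> {..<m2}" "t \<in> {..<b}"
    then have st: "s < m2" "t < b" by auto
    have "s*b+t < (s+1)*b" using st by simp
    also have "\<dots> \<le> m2*b" using st by (intro mult_right_mono) auto
    finally have "s*b+t < b*m2" by (simp add: mult.commute)
    moreover have "(s*b+t) div b = s" "(s*b+t) mod b = t" using st by auto
    ultimately show "block_mat a b m1 m2 f $$ (x0, s*b+t) * block_mat b c m2 m3 g $$ (s*b+t, y0)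
        = f p (s+1) $$ (x,t) * g (s+1) q $$ (t,y)"
      using xy0 by (simp add: index_block_mat p_def q_def x_def y_def)
  qed
  also have "\<dots> = (\<Sum>s<m2. (f p (s+1) * g (s+1) q) $$ (x,y))"
  proof (intro sum.cong refl)
    fix s assume "s \<in> {..<m2}"
    then have "f p (s+1) \<in> carrier_mat a b" "g (s+1) q \<in> carrier_mat b c" using cf cg pq by auto
    then show "(\<Sum>t<b. f p (s+1) $$ (x,t) * g (s+1) q $$ (t,y)) = (f p (s+1) * g (s+1) q) $$ (x,y)"
      using pq by (simp add: scalar_prod_def lessThan_atLeast0)
  qed
  also have "\<dots> = (\<Sum>s\<in>{1..m2}. (f p s * g s q) $$ (x,y))"
    by (rule sum.reindex_bij_witness[of _ "\<lambda>s. s - 1" "\<lambda>s. s + 1"]) auto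
  also have "\<dots> = (\<Sum>s\<in>{c1 p q, c2 p q}. (f p s * g s q) $$ (x,y))"
    using cc[OF pq(1-4)] z pq by (intro sum.mono_neutral_right) auto
  also have "\<dots> = sparse_block_prod f g c1 c2 p q $$ (x,y)"
  proof -
    have "f p (c1 p q) \<in> carrier_mat a b" "f p (c2 p q) \<in> carrier_mat a b"
      "g (c1 p q) q \<in> carrier_mat b c" "g (c2 p q) q \<in> carrier_mat b c"
      using cc[OF pq(1-4)] cf[OF pq(1,2)] cg[OF _ _ pq(3,4)] by auto
    then show ?thesis using cc[OF pq(1-4)] pq by (simp add: sparse_block_prod_def)
  qed
  also have "\<dots> = block_mat a c m1 m3 (sparse_block_prod f g c1 c2) $$ (x0,y0)"
    using xy0 by (simp add: index_block_mat p_def q_def x_def y_def)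
  finally show "(block_mat a b m1 m2 f * block_mat b c m2 m3 g) $$ (x0,y0)
      = block_mat a c m1 m3 (sparse_block_prod f g c1 c2) $$ (x0,y0)" .
qed auto

lemma add_block_mat:
  assumes "\<And>p q. 1 \<le> p \<Longrightarrow> p \<le> m1 \<Longrightarrow> 1 \<le> q \<Longrightarrow> q \<le> m2 \<Longrightarrow> g p q \<in> carrier_mat a b"
  shows "block_mat a b m1 m2 f + block_mat a b m1 m2 g = block_mat a b m1 m2 (\<lambda>p q. f p q + g p q)"
proof (rule eq_matI)
  fix x y assume "x < dim_row (block_mat a b m1 m2 (\<lambda>p q. f p q + g p q))"
    "y < dim_col (block_mat a b m1 m2 (\<lambda>p q. f p q + g p q))"
  then have xy: "x < a*m1" "y < b*m2" by auto
  then have "g (x div a + 1) (y div b + 1) \<in> carrier_mat a b"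
    using assms div_less_of_less_mult[OF xy(1)] div_less_of_less_mult[OF xy(2)] by auto
  then show "(block_mat a b m1 m2 f + block_mat a b m1 m2 g) $$ (x,y)
      = block_mat a b m1 m2 (\<lambda>p q. f p q + g p q) $$ (x,y)"
    using xy mod_less_of_less_mult[OF xy(1)] mod_less_of_less_mult[OF xy(2)]
    by (simp add: index_block_mat)
qed auto

lemma smult_block_mat:
  assumes "\<And>p q. 1 \<le> p \<Longrightarrow> p \<le> m1 \<Longrightarrow> 1 \<le> q \<Longrightarrow> q \<le> m2 \<Longrightarrow> f p q \<in> carrier_mat a b"
  shows "k \<cdot>\<^sub>m block_mat a b m1 m2 f = block_mat a b m1 m2 (\<lambda>p q. k \<cdot>\<^sub>m f p q)"
proof (rule eq_matI)
  fix x y assume "x < dim_row (block_mat a b m1 m2 (\<lambda>p q. k \<cdot>\<^sub>m f p q))"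
    "y < dim_col (block_mat a b m1 m2 (\<lambda>p q. k \<cdot>\<^sub>m f p q))"
  then have xy: "x < a*m1" "y < b*m2" by auto
  then have "f (x div a + 1) (y div b + 1) \<in> carrier_mat a b"
    using assms div_less_of_less_mult[OF xy(1)] div_less_of_less_mult[OF xy(2)] by auto
  then show "(k \<cdot>\<^sub>m block_mat a b m1 m2 f) $$ (x,y) = block_mat a b m1 m2 (\<lambda>p q. k \<cdot>\<^sub>m f p q) $$ (x,y)"
    using xy mod_less_of_less_mult[OF xy(1)] mod_less_of_less_mult[OF xy(2)]
    by (simp add: index_block_mat)
qed auto

lemma block_mat_zero: "block_mat a b m1 m2 (\<lambda>p q. 0\<^sub>m a b) = 0\<^sub>m (a*m1) (b*m2)"
proof (rule eq_matI)
  fix x y assume "x < dim_row (0\<^sub>m (a*m1) (b*m2) :: 'a mat)" "y < dim_col (0\<^sub>m (a*m1) (b*m2) :: 'a mat)"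
  then have xy: "x < a*m1" "y < b*m2" by auto
  then show "block_mat a b m1 m2 (\<lambda>p q. 0\<^sub>m a b) $$ (x,y) = (0\<^sub>m (a*m1) (b*m2) :: 'a::zero mat) $$ (x,y)"
    using mod_less_of_less_mult[OF xy(1)] mod_less_of_less_mult[OF xy(2)] by (simp add: index_block_mat)
qed auto

lemma block_transpose_block_mat:
  assumes "0 < n"
  shows "block_transpose n m (block_mat n n m m f) = block_mat n n m m (\<lambda>p q. f q p)"
proof (rule eq_matI)
  fix x y assume "x < dim_row (block_mat n n m m (\<lambda>p q. f q p))" "y < dim_col (block_mat n n m m (\<lambda>p q. f q p))"
  then have xy: "x < n*m" "y < n*m" by auto
  have "\<And>u v. u < n*m \<Longrightarrow> u div n * n + v mod n < n*m"
  proof -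
    fix u v :: nat assume "u < n*m"
    have "u div n * n + v mod n < (u div n + 1) * n" using assms by simp
    also have "\<dots> \<le> m * n"
      using div_less_of_less_mult[OF \<open>u < n*m\<close>] by (intro mult_le_mono1) simp
    finally show "u div n * n + v mod n < n*m" by (simp add: mult.commute)
  qed
  then show "block_transpose n m (block_mat n n m m f) $$ (x,y) = block_mat n n m m (\<lambda>p q. f q p) $$ (x,y)"
    using xy assms by (simp add: block_transpose_def index_block_mat)
qed (auto simp: block_transpose_def)

lemma block_transpose_carrier[simp]:
  "dim_row (block_transpose n m H) = n*m" "dim_col (block_transpose n m H) = n*m"
  by (simp_all add: block_transpose_def)

lemma cmat_block_mat:
  assumes "\<And>p q. 1 \<le> p \<Longrightarrow> p \<le> m1 \<Longrightarrow> 1 \<le> q \<Longrightarrow> q \<le> m2 \<Longrightarrow> f p q \<in> carrier_mat a b"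
  shows "cmat (block_mat a b m1 m2 f) = block_mat a b m1 m2 (\<lambda>p q. cmat (f p q))"
proof (rule eq_matI)
  fix x y assume "x < dim_row (block_mat a b m1 m2 (\<lambda>p q. cmat (f p q)))"
    "y < dim_col (block_mat a b m1 m2 (\<lambda>p q. cmat (f p q)))"
  then have xy: "x < a*m1" "y < b*m2" by auto
  then have "f (x div a + 1) (y div b + 1) \<in> carrier_mat a b"
    using assms div_less_of_less_mult[OF xy(1)] div_less_of_less_mult[OF xy(2)] by auto
  then show "cmat (block_mat a b m1 m2 f) $$ (x,y) = block_mat a b m1 m2 (\<lambda>p q. cmat (f p q)) $$ (x,y)"
    using xy mod_less_of_less_mult[OF xy(1)] mod_less_of_less_mult[OF xy(2)]
    by (simp add: index_block_mat cmat_def)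
qed (auto simp: cmat_def)

lemma cmat_index[simp]:
  "x < dim_row X \<Longrightarrow> y < dim_col X \<Longrightarrow> cmat X $$ (x,y) = [:X $$ (x,y):]"
  "dim_row (cmat X) = dim_row X" "dim_col (cmat X) = dim_col X"
  by (auto simp: cmat_def)

lemma cmat_carrier[simp]: "X \<in> carrier_mat a b \<Longrightarrow> cmat X \<in> carrier_mat a b"
  by (auto simp: cmat_def)

lemma cmat_one[simp]: "cmat (1\<^sub>m r) = 1\<^sub>m r"
  by (rule eq_matI) (auto simp: cmat_def)

lemma cmat_zero[simp]: "cmat (0\<^sub>m a b) = 0\<^sub>m a b"
  by (rule eq_matI) (auto simp: cmat_def)

lemma cmat_uminus: "cmat (- X) = - cmat X"
  by (rule eq_matI) (auto simp: cmat_def)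

lemma uminus_zero_mat[simp]: "- 0\<^sub>m a b = (0\<^sub>m a b :: 'a::group_add mat)"
  by (rule eq_matI) auto

lemma smult_one_mat_mult[simp]:
  "dim_row X = n \<Longrightarrow> (k \<cdot>\<^sub>m 1\<^sub>m n) * X = (k::'a::comm_ring_1) \<cdot>\<^sub>m X"
proof -
  assume "dim_row X = n"
  then have X: "X \<in> carrier_mat n (dim_col X)" by auto
  show ?thesis using mult_smult_assoc_mat[OF one_carrier_mat X, of k] X by simp
qed

lemma mult_smult_one_mat[simp]:
  "dim_col X = n \<Longrightarrow> X * (k \<cdot>\<^sub>m 1\<^sub>m n) = (k::'a::comm_ring_1) \<cdot>\<^sub>m X"
proof -
  assume "dim_col X = n"
  then have X: "X \<in> carrier_mat (dim_row X) n" by auto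
  show ?thesis using mult_smult_distrib[OF X one_carrier_mat, of k] X by simp
qed

lemma horner_carrier[simp]:
  "horner n m A k \<in> carrier_mat n n" "dim_row (horner n m A k) = n" "dim_col (horner n m A k) = n"
  by (auto simp: horner_def)

lemma horner_rec:
  assumes "1 \<le> k" "k \<le> m" "x < n" "y < n"
  shows "horner n m A k $$ (x,y) = [:A (m - k) $$ (x,y):] + lam * horner n m A (k - 1) $$ (x,y)"
proof -
  obtain l where k: "k = Suc l" using assms(1) by (cases k) auto
  have "horner n m A k $$ (x,y) = (\<Sum>j=0..Suc l. monom (A (m - Suc l + j) $$ (x,y)) j)"
    using assms by (simp add: horner_def k)
  also have "\<dots> = monom (A (m - Suc l) $$ (x,y)) 0
      + (\<Sum>j=0..l. monom (A (m - Suc l + Suc j) $$ (x,y)) (Suc j))"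
    by (subst sum.atLeast0_atMost_Suc_shift) simp
  also have "(\<Sum>j=0..l. monom (A (m - Suc l + Suc j) $$ (x,y)) (Suc j))
      = lam * (\<Sum>j=0..l. monom (A (m - l + j) $$ (x,y)) j)"
    unfolding sum_distrib_left
  proof (intro sum.cong refl)
    fix j
    have shift: "m - Suc l + Suc j = m - l + j" using assms k by simp
    show "monom (A (m - Suc l + Suc j) $$ (x,y)) (Suc j) = lam * monom (A (m - l + j) $$ (x,y)) j"
      unfolding shift by (simp add: lam_def monom_Suc)
  qed
  finally show ?thesis using assms by (simp add: horner_def monom_0 k)
qed

definition Q_blocks :: "nat \<Rightarrow> nat \<Rightarrow> nat \<Rightarrow> nat \<Rightarrow> complex poly mat" where
  "Q_blocks n i = (\<lambda>p q. if p = q then 1\<^sub>m n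
      else if p = i \<and> q = i + 1 then lam \<cdot>\<^sub>m 1\<^sub>m n else 0\<^sub>m n n)"

definition R_blocks :: "nat \<Rightarrow> nat \<Rightarrow> (nat \<Rightarrow> complex mat) \<Rightarrow> nat \<Rightarrow> nat \<Rightarrow> nat \<Rightarrow> complex poly mat" where
  "R_blocks n m A i = (\<lambda>p q.
      if p = i \<and> q = i then 0\<^sub>m n n
      else if p = i \<and> q = i + 1 then 1\<^sub>m n
      else if p = i + 1 \<and> q = i then 1\<^sub>m n
      else if p = i + 1 \<and> q = i + 1 then horner n m A i
      else if p = q then 1\<^sub>m n else 0\<^sub>m n n)"

definition T_blocks :: "nat \<Rightarrow> nat \<Rightarrow> (nat \<Rightarrow> complex mat) \<Rightarrow> nat \<Rightarrow> nat \<Rightarrow> nat \<Rightarrow> complex poly mat" where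
  "T_blocks n m A i = (\<lambda>p q.
      if p = i \<and> q = i + 1 then lam \<cdot>\<^sub>m horner n m A (i - 1)
      else if p = i + 1 \<and> q = i then lam \<cdot>\<^sub>m 1\<^sub>m n
      else if p = i + 1 \<and> q = i + 1 then (lam ^ 2) \<cdot>\<^sub>m horner n m A (i - 1)
      else 0\<^sub>m n n)"

definition D_blocks :: "nat \<Rightarrow> nat \<Rightarrow> (nat \<Rightarrow> complex mat) \<Rightarrow> nat \<Rightarrow> nat \<Rightarrow> nat \<Rightarrow> complex poly mat" where
  "D_blocks n m A i = (\<lambda>p q.
      if p \<noteq> q then 0\<^sub>m n n
      else if p < i then 0\<^sub>m n n
      else if p = i then horner n m A (i - 1)
      else 1\<^sub>m n)"

text \<open>The nontrivial \<open>2 \<times> 2\<close> block of \<open>M\<^sub>k\<close> sits at block position \<open>t = m - k\<close>; with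
  \<open>X = A\<^sub>0\<close> and \<open>t = m\<close> the blocks of \<open>M\<^sub>0\<close> are obtained as well, the other three entries
  of that \<open>2 \<times> 2\<close> block falling outside the matrix.\<close>
definition fiedler_blocks :: "nat \<Rightarrow> complex mat \<Rightarrow> nat \<Rightarrow> nat \<Rightarrow> nat \<Rightarrow> complex poly mat" where
  "fiedler_blocks n X t = (\<lambda>p q.
      if p = t \<and> q = t then - cmat X
      else if p = t \<and> q = t + 1 then 1\<^sub>m n
      else if p = t + 1 \<and> q = t then 1\<^sub>m n
      else if p = t + 1 \<and> q = t + 1 then 0\<^sub>m n n
      else if p = q then 1\<^sub>m n else 0\<^sub>m n n)"

definition neg_em_col_blocks :: "nat \<Rightarrow> nat \<Rightarrow> nat \<Rightarrow> complex mat \<Rightarrow> nat \<Rightarrow> nat \<Rightarrow> complex poly mat" where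
  "neg_em_col_blocks n m r C = (\<lambda>p q. if p = m then - cmat C else 0\<^sub>m n r)"

definition neg_em_row_blocks :: "nat \<Rightarrow> nat \<Rightarrow> nat \<Rightarrow> complex mat \<Rightarrow> nat \<Rightarrow> nat \<Rightarrow> complex poly mat" where
  "neg_em_row_blocks n m r B = (\<lambda>p q. if q = m then - cmat B else 0\<^sub>m r n)"

lemma blocks_carrier[simp]:
  "Q_blocks n i p q \<in> carrier_mat n n" "R_blocks n m A i p q \<in> carrier_mat n n"
  "T_blocks n m A i p q \<in> carrier_mat n n" "D_blocks n m A i p q \<in> carrier_mat n n"
  "X \<in> carrier_mat n n \<Longrightarrow> fiedler_blocks n X t p q \<in> carrier_mat n n"
  "C \<in> carrier_mat n r \<Longrightarrow> neg_em_col_blocks n m r C p q \<in> carrier_mat n r"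
  "B \<in> carrier_mat r n \<Longrightarrow> neg_em_row_blocks n m r B p q \<in> carrier_mat r n"
  by (auto simp: Q_blocks_def R_blocks_def T_blocks_def D_blocks_def fiedler_blocks_def
      neg_em_col_blocks_def neg_em_row_blocks_def)

lemma blocks_dims[simp]:
  "dim_row (Q_blocks n i p q) = n" "dim_col (Q_blocks n i p q) = n"
  "dim_row (R_blocks n m A i p q) = n" "dim_col (R_blocks n m A i p q) = n"
  "dim_row (T_blocks n m A i p q) = n" "dim_col (T_blocks n m A i p q) = n"
  "dim_row (D_blocks n m A i p q) = n" "dim_col (D_blocks n m A i p q) = n"
  "X \<in> carrier_mat n n \<Longrightarrow> dim_row (fiedler_blocks n X t p q) = n"
  "X \<in> carrier_mat n n \<Longrightarrow> dim_col (fiedler_blocks n X t p q) = n"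
  by (meson blocks_carrier carrier_matD)+

lemma Qm_block_mat: "Qm n m i = block_mat n n m m (Q_blocks n i)"
  by (simp add: Qm_def Q_blocks_def blk_eq_block_mat)

lemma Rm_block_mat: "Rm n m A i = block_mat n n m m (R_blocks n m A i)"
  by (simp add: Rm_def R_blocks_def blk_eq_block_mat)

lemma Tm_block_mat: "Tm n m A i = block_mat n n m m (T_blocks n m A i)"
  by (simp add: Tm_def T_blocks_def blk_eq_block_mat)

lemma Dm_block_mat: "Dm n m A i = block_mat n n m m (D_blocks n m A i)"
  by (simp add: Dm_def D_blocks_def blk_eq_block_mat)

lemma cmat_fiedler_zero:
  assumes "0 < m" "A 0 \<in> carrier_mat n n"
  shows "cmat (fiedler n m A 0) = block_mat n n m m (fiedler_blocks n (A 0) m)"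
proof -
  have "cmat (fiedler n m A 0) = cmat (block_mat n n m m (\<lambda>p q.
      if p \<noteq> q then 0\<^sub>m n n else if p = m then - A 0 else 1\<^sub>m n))"
    by (simp add: fiedler_def blk_eq_block_mat)
  also have "\<dots> = block_mat n n m m (fiedler_blocks n (A 0) m)"
    using assms
    by (subst cmat_block_mat) (auto simp: fiedler_blocks_def cmat_uminus intro!: block_mat_cong)
  finally show ?thesis .
qed

lemma cmat_fiedler_mid:
  assumes "0 < k" "k < m" "A k \<in> carrier_mat n n"
  shows "cmat (fiedler n m A k) = block_mat n n m m (fiedler_blocks n (A k) (m - k))"
proof -
  have "cmat (fiedler n m A k) = cmat (block_mat n n m m (\<lambda>p q.
      if p = m - k \<and> q = m - k then - A k
      else if p = m - k \<and> q = m - k + 1 then 1\<^sub>m n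
      else if p = m - k + 1 \<and> q = m - k then 1\<^sub>m n
      else if p = m - k + 1 \<and> q = m - k + 1 then 0\<^sub>m n n
      else if p = q then 1\<^sub>m n else 0\<^sub>m n n))"
    using assms by (simp add: fiedler_def blk_eq_block_mat)
  also have "\<dots> = block_mat n n m m (fiedler_blocks n (A k) (m - k))"
    using assms
    by (subst cmat_block_mat) (auto simp: fiedler_blocks_def cmat_uminus intro!: block_mat_cong)
  finally show ?thesis .
qed

lemma cmat_neg_em_col:
  assumes "C \<in> carrier_mat n r"
  shows "cmat (- em_col n m r C) = block_mat n r m 1 (neg_em_col_blocks n m r C)"
proof (rule eq_matI)
  fix x y assume "x < dim_row (block_mat n r m 1 (neg_em_col_blocks n m r C))"
    "y < dim_col (block_mat n r m 1 (neg_em_col_blocks n m r C))"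
  then have xy: "x < n*m" "y < r" by auto
  then show "cmat (- em_col n m r C) $$ (x,y) = block_mat n r m 1 (neg_em_col_blocks n m r C) $$ (x,y)"
    using assms mod_less_of_less_mult[OF xy(1)]
    by (simp add: index_block_mat em_col_def neg_em_col_blocks_def)
qed (auto simp: em_col_def)

lemma cmat_neg_em_row:
  assumes "B \<in> carrier_mat r n"
  shows "cmat (- em_row n m r B) = block_mat r n 1 m (neg_em_row_blocks n m r B)"
proof (rule eq_matI)
  fix x y assume "x < dim_row (block_mat r n 1 m (neg_em_row_blocks n m r B))"
    "y < dim_col (block_mat r n 1 m (neg_em_row_blocks n m r B))"
  then have xy: "x < r" "y < n*m" by auto
  then show "cmat (- em_row n m r B) $$ (x,y) = block_mat r n 1 m (neg_em_row_blocks n m r B) $$ (x,y)"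
    using assms mod_less_of_less_mult[OF xy(2)]
    by (simp add: index_block_mat em_row_def neg_em_row_blocks_def)
qed (auto simp: em_row_def)


lemma Q_blocks_zero: "p \<noteq> q \<Longrightarrow> \<not> (p = i \<and> q = i+1) \<Longrightarrow> Q_blocks n i p q = 0\<^sub>m n n"
  by (auto simp: Q_blocks_def)

lemma R_blocks_zero:
  "p \<noteq> q \<Longrightarrow> \<not> (p = i \<and> q = i+1) \<Longrightarrow> \<not> (p = i+1 \<and> q = i) \<Longrightarrow> R_blocks n m A i p q = 0\<^sub>m n n"
  by (auto simp: R_blocks_def)

lemma R_blocks_diag_zero: "R_blocks n m A i i i = 0\<^sub>m n n"
  by (auto simp: R_blocks_def)

lemma T_blocks_zero:
  "\<not> ((p = i \<or> p = i+1) \<and> (q = i \<or> q = i+1)) \<Longrightarrow> T_blocks n m A i p q = 0\<^sub>m n n"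
  by (auto simp: T_blocks_def)

lemma fiedler_blocks_zero:
  "p \<noteq> q \<Longrightarrow> \<not> (p = t \<and> q = t+1) \<Longrightarrow> \<not> (p = t+1 \<and> q = t) \<Longrightarrow> fiedler_blocks n X t p q = 0\<^sub>m n n"
  by (auto simp: fiedler_blocks_def)

lemma mult_diag2:
  fixes X :: "'a::comm_ring_1 mat"
  shows "dim_row X = N \<Longrightarrow> dim_col X = N \<Longrightarrow> dim_row Y = N \<Longrightarrow> dim_col Y = N \<Longrightarrow>
   dim_row Z = r \<Longrightarrow> dim_col Z = r \<Longrightarrow> dim_row W = r \<Longrightarrow> dim_col W = r \<Longrightarrow>
   diag2 N r X Z * diag2 N r Y W = diag2 N r (X*Y) (Z*W)"
  unfolding diag2_def by (subst mult_four_block_mat) (auto intro: carrier_matI)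

lemma add_diag2:
  fixes X :: "'a::comm_ring_1 mat"
  shows "dim_row X = N \<Longrightarrow> dim_col X = N \<Longrightarrow> dim_row Y = N \<Longrightarrow> dim_col Y = N \<Longrightarrow>
   dim_row Z = r \<Longrightarrow> dim_col Z = r \<Longrightarrow> dim_row W = r \<Longrightarrow> dim_col W = r \<Longrightarrow>
   diag2 N r X Z + diag2 N r Y W = diag2 N r (X+Y) (Z+W)"
  unfolding diag2_def by (subst add_four_block_mat) (auto intro: carrier_matI)

lemma smult_diag2:
  fixes X :: "'a::comm_ring_1 mat"
  shows "dim_row X = N \<Longrightarrow> dim_col X = N \<Longrightarrow> dim_row Z = r \<Longrightarrow> dim_col Z = r \<Longrightarrow>
   k \<cdot>\<^sub>m diag2 N r X Z = diag2 N r (k \<cdot>\<^sub>m X) (k \<cdot>\<^sub>m Z)"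
  unfolding diag2_def by (subst smult_four_block_mat) (auto intro: carrier_matI)

lemma four_block_mat_mult_diag2:
  fixes A :: "'a::comm_ring_1 mat"
  shows "dim_row A = N \<Longrightarrow> dim_col A = N \<Longrightarrow> dim_row B = N \<Longrightarrow> dim_col B = r \<Longrightarrow>
    dim_row C = r \<Longrightarrow> dim_col C = N \<Longrightarrow> dim_row D = r \<Longrightarrow> dim_col D = r \<Longrightarrow>
    dim_row X = N \<Longrightarrow> dim_col X = N \<Longrightarrow> dim_row Z = r \<Longrightarrow> dim_col Z = r \<Longrightarrow>
    four_block_mat A B C D * diag2 N r X Z = four_block_mat (A*X) (B*Z) (C*X) (D*Z)"
  unfolding diag2_def by (subst mult_four_block_mat) (auto intro: carrier_matI)

lemma diag2_mult_four_block_mat: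
  fixes A :: "'a::comm_ring_1 mat"
  shows "dim_row A = N \<Longrightarrow> dim_col A = N \<Longrightarrow> dim_row B = N \<Longrightarrow> dim_col B = r \<Longrightarrow>
    dim_row C = r \<Longrightarrow> dim_col C = N \<Longrightarrow> dim_row D = r \<Longrightarrow> dim_col D = r \<Longrightarrow>
    dim_row X = N \<Longrightarrow> dim_col X = N \<Longrightarrow> dim_row Z = r \<Longrightarrow> dim_col Z = r \<Longrightarrow>
    diag2 N r X Z * four_block_mat A B C D = four_block_mat (X*A) (X*B) (Z*C) (Z*D)"
  unfolding diag2_def by (subst mult_four_block_mat) (auto intro: carrier_matI)

lemma four_block_mat_add_diag2:
  fixes A :: "'a::comm_ring_1 mat"
  shows "dim_row A = N \<Longrightarrow> dim_col A = N \<Longrightarrow> dim_row B = N \<Longrightarrow> dim_col B = r \<Longrightarrow>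
    dim_row C = r \<Longrightarrow> dim_col C = N \<Longrightarrow> dim_row D = r \<Longrightarrow> dim_col D = r \<Longrightarrow>
    dim_row X = N \<Longrightarrow> dim_col X = N \<Longrightarrow> dim_row Z = r \<Longrightarrow> dim_col Z = r \<Longrightarrow>
    four_block_mat A B C D + diag2 N r X Z = four_block_mat (A+X) B C (D+Z)"
  unfolding diag2_def by (subst add_four_block_mat) (auto intro: carrier_matI)

lemma sys_bt_diag_eq_diag2: "sys_bt_diag n m r H Z = diag2 (n*m) r (block_transpose n m H) Z"
  by (simp add: sys_bt_diag_def diag2_def)

lemma sys_fiedler_mid:
  assumes "0 < k" "k < m" "A k \<in> carrier_mat n n"
  shows "sys_fiedler n m r A Amat E B C k
    = diag2 (n*m) r (block_mat n n m m (fiedler_blocks n (A k) (m - k))) (1\<^sub>m r)"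
proof -
  have "fiedler n m A k \<in> carrier_mat (n*m) (n*m)"
    by (simp add: fiedler_def blk_eq_block_mat)
  then have "cmat (four_block_mat (fiedler n m A k) (0\<^sub>m (n*m) r) (0\<^sub>m r (n*m)) (1\<^sub>m r))
      = four_block_mat (cmat (fiedler n m A k)) (cmat (0\<^sub>m (n*m) r)) (cmat (0\<^sub>m r (n*m))) (cmat (1\<^sub>m r))"
    unfolding cmat_def by (rule map_four_block_mat) auto
  then show ?thesis
    using assms by (simp add: sys_fiedler_def cmat_fiedler_mid diag2_def)
qed

lemma sys_fiedler_zero:
  assumes "0 < m" "A 0 \<in> carrier_mat n n" "C \<in> carrier_mat n r" "B \<in> carrier_mat r n"
    "Amat \<in> carrier_mat r r"
  shows "sys_fiedler n m r A Amat E B C 0 = four_block_mat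
    (block_mat n n m m (fiedler_blocks n (A 0) m)) (block_mat n r m 1 (neg_em_col_blocks n m r C))
    (block_mat r n 1 m (neg_em_row_blocks n m r B)) (- cmat Amat)"
proof -
  have "sys_fiedler n m r A Amat E B C 0
      = cmat (four_block_mat (fiedler n m A 0) (- em_col n m r C) (- em_row n m r B) (- Amat))"
    by (simp add: sys_fiedler_def)
  also have "\<dots> = four_block_mat (cmat (fiedler n m A 0)) (cmat (- em_col n m r C))
      (cmat (- em_row n m r B)) (cmat (- Amat))"
  proof -
    have "fiedler n m A 0 \<in> carrier_mat (n*m) (n*m)"
      by (simp add: fiedler_def blk_eq_block_mat)
    moreover have "- em_col n m r C \<in> carrier_mat (n*m) r" "- em_row n m r B \<in> carrier_mat r (n*m)"
      by (simp_all add: em_col_def em_row_def)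
    ultimately show ?thesis
      unfolding cmat_def using assms(5) by (intro map_four_block_mat) auto
  qed
  finally show ?thesis
    using assms by (simp add: cmat_fiedler_zero cmat_neg_em_col cmat_neg_em_row cmat_uminus[of Amat])
qed

section \<open>The identities on the polynomial part\<close>

lemma block_transpose_Qm_Dm_Rm:
  assumes n: "0 < n" and i: "1 \<le> i" "i \<le> m - 1"
  shows "block_transpose n m (Qm n m i) * (lam \<cdot>\<^sub>m Dm n m A i) * Rm n m A i
     = lam \<cdot>\<^sub>m Dm n m A (i+1) + Tm n m A i"
proof -
  have m: "2 \<le> m" using i by auto
  let ?QB = "\<lambda>p q. Q_blocks n i q p"
  let ?LD = "\<lambda>p q. lam \<cdot>\<^sub>m D_blocks n m A i p q"
  let ?c1 = "\<lambda>p q::nat. p"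
  \<comment> \<open>blocks with a single nonzero summand get some other index (here \<open>m \<ge> 2\<close> is used)\<close>
  let ?c2 = "\<lambda>p q::nat. if p = i+1 then i else if p = 1 then 2 else (1::nat)"
  let ?d1 = "\<lambda>p q::nat. if q = i \<or> q = i+1 then i+1 else q"
  let ?d2 = "\<lambda>p q::nat. if q = i \<or> q = i+1 then i else if q = 1 then 2 else (1::nat)"
  have QD: "block_mat n n m m ?QB * block_mat n n m m ?LD
      = block_mat n n m m (sparse_block_prod ?QB ?LD ?c1 ?c2)"
    by (rule mult_block_mat_sparse) (use i m in \<open>auto simp: Q_blocks_def\<close>)
  have QDR: "block_mat n n m m (sparse_block_prod ?QB ?LD ?c1 ?c2) * block_mat n n m m (R_blocks n m A i)
     = block_mat n n m m (sparse_block_prod (sparse_block_prod ?QB ?LD ?c1 ?c2) (R_blocks n m A i) ?d1 ?d2)"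
    by (rule mult_block_mat_sparse)
      (use i m sparse_block_prod_carrier[of ?QB n n ?LD n] in \<open>auto simp: R_blocks_def\<close>)
  have lhs: "block_transpose n m (Qm n m i) * (lam \<cdot>\<^sub>m Dm n m A i) * Rm n m A i
     = block_mat n n m m (sparse_block_prod (sparse_block_prod ?QB ?LD ?c1 ?c2) (R_blocks n m A i) ?d1 ?d2)"
    unfolding Qm_block_mat Dm_block_mat Rm_block_mat block_transpose_block_mat[OF n] using QD QDR
    by (simp add: smult_block_mat)
  have rhs: "lam \<cdot>\<^sub>m Dm n m A (i+1) + Tm n m A i
      = block_mat n n m m (\<lambda>p q. lam \<cdot>\<^sub>m D_blocks n m A (i+1) p q + T_blocks n m A i p q)"
    unfolding Dm_block_mat Tm_block_mat by (simp add: smult_block_mat add_block_mat)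
  show ?thesis unfolding lhs rhs
  proof (rule block_mat_eqI)
    fix p q u v assume pq: "1 \<le> p" "p \<le> m" "1 \<le> q" "q \<le> m" "u < n" "v < n"
    have "p < i \<or> p = i \<or> p = Suc i \<or> Suc i < p" "q < i \<or> q = i \<or> q = Suc i \<or> Suc i < q" by arith+
    then show "sparse_block_prod (sparse_block_prod ?QB ?LD ?c1 ?c2) (R_blocks n m A i) ?d1 ?d2 p q $$ (u,v) =
      (lam \<cdot>\<^sub>m D_blocks n m A (i+1) p q + T_blocks n m A i p q) $$ (u,v)"
      using pq i m unfolding sparse_block_prod_def
      by (elim disjE) (simp_all add: Q_blocks_def R_blocks_def D_blocks_def T_blocks_def power2_eq_square)
  qed
qed

lemma block_transpose_Rm_Dm_Qm:
  assumes n: "0 < n" and i: "1 \<le> i" "i \<le> m - 1"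
  shows "block_transpose n m (Rm n m A i) * (lam \<cdot>\<^sub>m Dm n m A i) * Qm n m i
     = lam \<cdot>\<^sub>m Dm n m A (i+1) + block_transpose n m (Tm n m A i)"
proof -
  let ?RB = "\<lambda>p q. R_blocks n m A i q p"
  let ?LD = "\<lambda>p q. lam \<cdot>\<^sub>m D_blocks n m A i p q"
  let ?c1 = "\<lambda>p q::nat. if p = i \<or> p = i+1 then i+1 else p"
  let ?c2 = "\<lambda>p q::nat. i"
  let ?d1 = "\<lambda>p q::nat. q"
  let ?d2 = "\<lambda>p q::nat. if q = i then i+1 else i"
  have RD: "block_mat n n m m ?RB * block_mat n n m m ?LD
      = block_mat n n m m (sparse_block_prod ?RB ?LD ?c1 ?c2)"
    by (rule mult_block_mat_sparse) (use i in \<open>auto simp: R_blocks_zero split: if_splits\<close>)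
  have cY: "\<And>p q. sparse_block_prod ?RB ?LD ?c1 ?c2 p q \<in> carrier_mat n n"
    by (rule sparse_block_prod_carrier) auto
  then have dY: "\<And>p q. dim_row (sparse_block_prod ?RB ?LD ?c1 ?c2 p q) = n"
      "\<And>p q. dim_col (sparse_block_prod ?RB ?LD ?c1 ?c2 p q) = n"
    by auto
  have RDQ: "block_mat n n m m (sparse_block_prod ?RB ?LD ?c1 ?c2) * block_mat n n m m (Q_blocks n i)
     = block_mat n n m m (sparse_block_prod (sparse_block_prod ?RB ?LD ?c1 ?c2) (Q_blocks n i) ?d1 ?d2)"
    by (rule mult_block_mat_sparse) (use i cY dY in \<open>auto simp: Q_blocks_zero split: if_splits\<close>)
  have lhs: "block_transpose n m (Rm n m A i) * (lam \<cdot>\<^sub>m Dm n m A i) * Qm n m i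
     = block_mat n n m m (sparse_block_prod (sparse_block_prod ?RB ?LD ?c1 ?c2) (Q_blocks n i) ?d1 ?d2)"
    unfolding Qm_block_mat Dm_block_mat Rm_block_mat block_transpose_block_mat[OF n] using RD RDQ
    by (simp add: smult_block_mat)
  have rhs: "lam \<cdot>\<^sub>m Dm n m A (i+1) + block_transpose n m (Tm n m A i)
      = block_mat n n m m (\<lambda>p q. lam \<cdot>\<^sub>m D_blocks n m A (i+1) p q + T_blocks n m A i q p)"
    unfolding Dm_block_mat Tm_block_mat block_transpose_block_mat[OF n] by (simp add: smult_block_mat add_block_mat)
  show ?thesis unfolding lhs rhs
  proof (rule block_mat_cong)
    fix p q assume pq: "1 \<le> p" "p \<le> m" "1 \<le> q" "q \<le> m"
    have "p < i \<or> p = i \<or> p = Suc i \<or> Suc i < p" "q < i \<or> q = i \<or> q = Suc i \<or> Suc i < q" by arith+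
    then show "sparse_block_prod (sparse_block_prod ?RB ?LD ?c1 ?c2) (Q_blocks n i) ?d1 ?d2 p q =
      lam \<cdot>\<^sub>m D_blocks n m A (i+1) p q + T_blocks n m A i q p"
      using pq i unfolding sparse_block_prod_def
      apply (elim disjE)
      apply (simp_all add: Q_blocks_def R_blocks_def D_blocks_def T_blocks_def)
      apply (auto intro!: eq_matI simp: power2_eq_square algebra_simps)
      done
  qed
qed

definition fiedler_prod_blocks :: "nat \<Rightarrow> complex mat \<Rightarrow> complex mat \<Rightarrow> nat \<Rightarrow> nat \<Rightarrow> nat \<Rightarrow> complex poly mat" where
  "fiedler_prod_blocks n X Y i = (\<lambda>p q.
      if p = i then (if q = i then - cmat Y else if q = i+1 then 1\<^sub>m n else 0\<^sub>m n n)
      else if p = i+1 then (if q = i then - cmat X else if q = i+2 then 1\<^sub>m n else 0\<^sub>m n n)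
      else if p = i+2 then (if q = i then 1\<^sub>m n else 0\<^sub>m n n)
      else if p = q then 1\<^sub>m n else 0\<^sub>m n n)"

definition fiedler_prod_rev_blocks :: "nat \<Rightarrow> complex mat \<Rightarrow> complex mat \<Rightarrow> nat \<Rightarrow> nat \<Rightarrow> nat \<Rightarrow> complex poly mat" where
  "fiedler_prod_rev_blocks n X Y i = (\<lambda>p q.
      if p = i then (if q = i then - cmat Y else if q = i+1 then - cmat X
        else if q = i+2 then 1\<^sub>m n else 0\<^sub>m n n)
      else if p = i+1 then (if q = i then 1\<^sub>m n else 0\<^sub>m n n)
      else if p = i+2 then (if q = i+1 then 1\<^sub>m n else 0\<^sub>m n n)
      else if p = q then 1\<^sub>m n else 0\<^sub>m n n)"

lemma fiedler_prod_blocks_carrier[simp]: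
  "X \<in> carrier_mat n n \<Longrightarrow> Y \<in> carrier_mat n n \<Longrightarrow> fiedler_prod_blocks n X Y i p q \<in> carrier_mat n n"
  "X \<in> carrier_mat n n \<Longrightarrow> Y \<in> carrier_mat n n \<Longrightarrow> fiedler_prod_rev_blocks n X Y i p q \<in> carrier_mat n n"
  by (simp_all add: fiedler_prod_blocks_def fiedler_prod_rev_blocks_def)

lemma fiedler_prod_blocks_dims[simp]:
  "X \<in> carrier_mat n n \<Longrightarrow> Y \<in> carrier_mat n n \<Longrightarrow> dim_row (fiedler_prod_blocks n X Y i p q) = n"
  "X \<in> carrier_mat n n \<Longrightarrow> Y \<in> carrier_mat n n \<Longrightarrow> dim_col (fiedler_prod_blocks n X Y i p q) = n"
  "X \<in> carrier_mat n n \<Longrightarrow> Y \<in> carrier_mat n n \<Longrightarrow> dim_row (fiedler_prod_rev_blocks n X Y i p q) = n"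
  "X \<in> carrier_mat n n \<Longrightarrow> Y \<in> carrier_mat n n \<Longrightarrow> dim_col (fiedler_prod_rev_blocks n X Y i p q) = n"
  by (meson fiedler_prod_blocks_carrier carrier_matD)+

lemma mult_fiedler_blocks:
  assumes X: "X \<in> carrier_mat n n" and Y: "Y \<in> carrier_mat n n" and i: "1 \<le> i" "i + 1 \<le> m"
  shows "block_mat n n m m (fiedler_blocks n X (i+1)) * block_mat n n m m (fiedler_blocks n Y i)
    = block_mat n n m m (fiedler_prod_blocks n X Y i)"
proof -
  let ?F1 = "fiedler_blocks n X (i+1)"
  let ?F2 = "fiedler_blocks n Y i"
  let ?a1 = "\<lambda>p q::nat. if p = i+2 then i+1 else p"
  let ?a2 = "\<lambda>p q::nat. if (p = i+1 \<or> p = i+2) \<and> i + 2 \<le> m then i+2 else if p = i then i+1 else i"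
  have "block_mat n n m m ?F1 * block_mat n n m m ?F2 = block_mat n n m m (sparse_block_prod ?F1 ?F2 ?a1 ?a2)"
    by (rule mult_block_mat_sparse) (use i X Y in \<open>auto simp: fiedler_blocks_zero split: if_splits\<close>)
  also have "\<dots> = block_mat n n m m (fiedler_prod_blocks n X Y i)"
  proof (rule block_mat_cong)
    fix p q assume pq: "1 \<le> p" "p \<le> m" "1 \<le> q" "q \<le> m"
    have "p < i \<or> p = i \<or> p = Suc i \<or> p = Suc (Suc i) \<or> Suc (Suc i) < p" by arith
    then show "sparse_block_prod ?F1 ?F2 ?a1 ?a2 p q = fiedler_prod_blocks n X Y i p q"
      using pq i X Y unfolding sparse_block_prod_def fiedler_prod_blocks_def
      by (elim disjE) (simp_all add: fiedler_blocks_def)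
  qed
  finally show ?thesis .
qed

lemma mult_fiedler_blocks_rev:
  assumes X: "X \<in> carrier_mat n n" and Y: "Y \<in> carrier_mat n n" and i: "1 \<le> i" "i + 1 \<le> m"
  shows "block_mat n n m m (fiedler_blocks n Y i) * block_mat n n m m (fiedler_blocks n X (i+1))
    = block_mat n n m m (fiedler_prod_rev_blocks n X Y i)"
proof -
  let ?F1 = "fiedler_blocks n X (i+1)"
  let ?F2 = "fiedler_blocks n Y i"
  let ?a1 = "\<lambda>p q::nat. if p = i+1 then i else p"
  let ?a2 = "\<lambda>p q::nat. if p = i \<or> p = i+1 then i+1 else i"
  have "block_mat n n m m ?F2 * block_mat n n m m ?F1 = block_mat n n m m (sparse_block_prod ?F2 ?F1 ?a1 ?a2)"
    by (rule mult_block_mat_sparse) (use i X Y in \<open>auto simp: fiedler_blocks_zero split: if_splits\<close>)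
  also have "\<dots> = block_mat n n m m (fiedler_prod_rev_blocks n X Y i)"
  proof (rule block_mat_cong)
    fix p q assume pq: "1 \<le> p" "p \<le> m" "1 \<le> q" "q \<le> m"
    have "p < i \<or> p = i \<or> p = Suc i \<or> p = Suc (Suc i) \<or> Suc (Suc i) < p" by arith
    then show "sparse_block_prod ?F2 ?F1 ?a1 ?a2 p q = fiedler_prod_rev_blocks n X Y i p q"
      using pq i X Y unfolding sparse_block_prod_def fiedler_prod_rev_blocks_def
      by (elim disjE) (simp_all add: fiedler_blocks_def)
  qed
  finally show ?thesis .
qed

lemma block_transpose_Qm_fiedler_Rm:
  assumes n: "0 < n" and i: "1 \<le> i" "i + 1 \<le> m"
    and X: "X \<in> carrier_mat n n" and Y: "A (m - i) \<in> carrier_mat n n"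
  shows "block_transpose n m (Qm n m i)
      * (block_mat n n m m (fiedler_blocks n X (i+1)) * block_mat n n m m (fiedler_blocks n (A (m - i)) i))
      * Rm n m A i
    = block_mat n n m m (fiedler_blocks n X (i+1)) + Tm n m A i"
proof -
  let ?F = "fiedler_blocks n X (i+1)"
  let ?Z = "fiedler_prod_blocks n X (A (m - i)) i"
  let ?QB = "\<lambda>p q. Q_blocks n i q p"
  define W where "W = (\<lambda>p q. if p = i+1 then
      (if q = i then - cmat X + lam \<cdot>\<^sub>m (- cmat (A (m - i))) else if q = i+1 then lam \<cdot>\<^sub>m 1\<^sub>m n
       else if q = i+2 then 1\<^sub>m n else 0\<^sub>m n n)
    else ?Z p q)"
  have cW: "\<And>p q. W p q \<in> carrier_mat n n" using X Y by (simp add: W_def)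
  then have dW: "\<And>p q. dim_row (W p q) = n" "\<And>p q. dim_col (W p q) = n" by auto
  have QZ: "block_mat n n m m ?QB * block_mat n n m m ?Z = block_mat n n m m W"
  proof -
    have "block_mat n n m m ?QB * block_mat n n m m ?Z
        = block_mat n n m m (sparse_block_prod ?QB ?Z (\<lambda>p q. p) (\<lambda>p q. if p = i then i+1 else i))"
      by (rule mult_block_mat_sparse) (use i X Y in \<open>auto simp: Q_blocks_zero split: if_splits\<close>)
    also have "\<dots> = block_mat n n m m W"
    proof (rule block_mat_cong)
      fix p q assume pq: "1 \<le> p" "p \<le> m" "1 \<le> q" "q \<le> m"
      have "p = Suc i \<or> p \<noteq> Suc i" by arith
      then show "sparse_block_prod ?QB ?Z (\<lambda>p q. p) (\<lambda>p q. if p = i then i+1 else i) p q = W p q"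
        using pq i X Y unfolding sparse_block_prod_def W_def
        by (elim disjE) (simp_all add: Q_blocks_def fiedler_prod_blocks_def)
    qed
    finally show ?thesis .
  qed
  let ?d1 = "\<lambda>p q::nat. if q = i \<or> q = i+1 then i+1 else q"
  let ?d2 = "\<lambda>p q::nat. i"
  have WR: "block_mat n n m m W * block_mat n n m m (R_blocks n m A i)
     = block_mat n n m m (sparse_block_prod W (R_blocks n m A i) ?d1 ?d2)"
    by (rule mult_block_mat_sparse)
      (use i cW dW in \<open>auto simp: R_blocks_zero R_blocks_diag_zero split: if_splits\<close>)
  have "block_mat n n m m (sparse_block_prod W (R_blocks n m A i) ?d1 ?d2)
      = block_mat n n m m (\<lambda>p q. ?F p q + T_blocks n m A i p q)"
  proof (rule block_mat_cong)
    fix p q assume pq: "1 \<le> p" "p \<le> m" "1 \<le> q" "q \<le> m"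
    have "p < i \<or> p = i \<or> p = Suc i \<or> p = Suc (Suc i) \<or> Suc (Suc i) < p"
      "q = i \<or> q = Suc i \<or> (q \<noteq> i \<and> q \<noteq> Suc i)" by arith+
    then show "sparse_block_prod W (R_blocks n m A i) ?d1 ?d2 p q = ?F p q + T_blocks n m A i p q"
      using pq i X Y unfolding sparse_block_prod_def
      apply (elim disjE)
      apply (simp_all add: W_def fiedler_prod_blocks_def R_blocks_def fiedler_blocks_def T_blocks_def)
      apply (auto intro!: eq_matI simp: horner_rec[of i] power2_eq_square algebra_simps)
      done
  qed
  then show ?thesis
    unfolding mult_fiedler_blocks[OF X Y i] Qm_block_mat Rm_block_mat Tm_block_mat
      block_transpose_block_mat[OF n] QZ WR using X by (simp add: add_block_mat)
qed

lemma block_transpose_Rm_fiedler_Qm: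
  assumes n: "0 < n" and i: "1 \<le> i" "i + 1 \<le> m"
    and X: "X \<in> carrier_mat n n" and Y: "A (m - i) \<in> carrier_mat n n"
  shows "block_transpose n m (Rm n m A i)
      * (block_mat n n m m (fiedler_blocks n (A (m - i)) i) * block_mat n n m m (fiedler_blocks n X (i+1)))
      * Qm n m i
    = block_mat n n m m (fiedler_blocks n X (i+1)) + block_transpose n m (Tm n m A i)"
proof -
  let ?F = "fiedler_blocks n X (i+1)"
  let ?Z = "fiedler_prod_rev_blocks n X (A (m - i)) i"
  let ?RB = "\<lambda>p q. R_blocks n m A i q p"
  define W where "W = (\<lambda>p q. if p = i then (if q = i then 1\<^sub>m n else 0\<^sub>m n n)
    else if p = i+1 then (if q = i then horner n m A i + - cmat (A (m - i))
      else if q = i+1 then - cmat X else if q = i+2 then 1\<^sub>m n else 0\<^sub>m n n)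
    else ?Z p q)"
  have cW: "\<And>p q. W p q \<in> carrier_mat n n" using X Y by (simp add: W_def)
  then have dW: "\<And>p q. dim_row (W p q) = n" "\<And>p q. dim_col (W p q) = n" by auto
  have RZ: "block_mat n n m m ?RB * block_mat n n m m ?Z = block_mat n n m m W"
  proof -
    let ?c1 = "\<lambda>p q::nat. if p = i \<or> p = i+1 then i+1 else p"
    have "block_mat n n m m ?RB * block_mat n n m m ?Z
        = block_mat n n m m (sparse_block_prod ?RB ?Z ?c1 (\<lambda>p q. i))"
      by (rule mult_block_mat_sparse) (use i X Y in \<open>auto simp: R_blocks_zero split: if_splits\<close>)
    also have "\<dots> = block_mat n n m m W"
    proof (rule block_mat_cong)
      fix p q assume pq: "1 \<le> p" "p \<le> m" "1 \<le> q" "q \<le> m"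
      have "p = i \<or> p = Suc i \<or> (p \<noteq> i \<and> p \<noteq> Suc i)" by arith
      then show "sparse_block_prod ?RB ?Z ?c1 (\<lambda>p q. i) p q = W p q"
        using pq i X Y unfolding sparse_block_prod_def W_def
        by (elim disjE) (simp_all add: R_blocks_def fiedler_prod_rev_blocks_def)
    qed
    finally show ?thesis .
  qed
  let ?d1 = "\<lambda>p q::nat. q"
  let ?d2 = "\<lambda>p q::nat. if q = i then i+1 else i"
  have WQ: "block_mat n n m m W * block_mat n n m m (Q_blocks n i)
     = block_mat n n m m (sparse_block_prod W (Q_blocks n i) ?d1 ?d2)"
    by (rule mult_block_mat_sparse) (use i cW dW in \<open>auto simp: Q_blocks_zero split: if_splits\<close>)
  have "block_mat n n m m (sparse_block_prod W (Q_blocks n i) ?d1 ?d2)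
      = block_mat n n m m (\<lambda>p q. ?F p q + T_blocks n m A i q p)"
  proof (rule block_mat_cong)
    fix p q assume pq: "1 \<le> p" "p \<le> m" "1 \<le> q" "q \<le> m"
    have "p < i \<or> p = i \<or> p = Suc i \<or> p = Suc (Suc i) \<or> Suc (Suc i) < p"
      "q = i \<or> q = Suc i \<or> (q \<noteq> i \<and> q \<noteq> Suc i)" by arith+
    then show "sparse_block_prod W (Q_blocks n i) ?d1 ?d2 p q = ?F p q + T_blocks n m A i q p"
      using pq i X Y unfolding sparse_block_prod_def
      apply (elim disjE)
      apply (simp_all add: W_def fiedler_prod_rev_blocks_def Q_blocks_def fiedler_blocks_def T_blocks_def)
      apply (auto intro!: eq_matI simp: horner_rec[of i] power2_eq_square algebra_simps)
      done
  qed
  then show ?thesis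
    unfolding mult_fiedler_blocks_rev[OF X Y i] Qm_block_mat Rm_block_mat Tm_block_mat
      block_transpose_block_mat[OF n] RZ WQ using X by (simp add: add_block_mat)
qed

section \<open>The coupling blocks of \<open>M\<^sub>0\<close>\<close>

lemma neg_em_blocks_dims[simp]:
  "C \<in> carrier_mat n r \<Longrightarrow> dim_row (neg_em_col_blocks n m r C p q) = n"
  "C \<in> carrier_mat n r \<Longrightarrow> dim_col (neg_em_col_blocks n m r C p q) = r"
  "B \<in> carrier_mat r n \<Longrightarrow> dim_row (neg_em_row_blocks n m r B p q) = r"
  "B \<in> carrier_mat r n \<Longrightarrow> dim_col (neg_em_row_blocks n m r B p q) = n"
  by (meson blocks_carrier carrier_matD)+

lemma block_transpose_Qm_mult_em_col:
  assumes n: "0 < n" and i: "1 \<le> i" "i < m" and C: "C \<in> carrier_mat n r"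
  shows "block_transpose n m (Qm n m i) * block_mat n r m 1 (neg_em_col_blocks n m r C)
    = block_mat n r m 1 (neg_em_col_blocks n m r C)"
proof -
  let ?QB = "\<lambda>p q. Q_blocks n i q p"
  let ?c2 = "\<lambda>p q::nat. if p = i then i+1 else i"
  have "block_mat n n m m ?QB * block_mat n r m 1 (neg_em_col_blocks n m r C)
      = block_mat n r m 1 (sparse_block_prod ?QB (neg_em_col_blocks n m r C) (\<lambda>p q. p) ?c2)"
    by (rule mult_block_mat_sparse) (use i C in \<open>auto simp: Q_blocks_zero split: if_splits\<close>)
  also have "\<dots> = block_mat n r m 1 (neg_em_col_blocks n m r C)"
  proof (rule block_mat_cong)
    fix p q :: nat assume pq: "1 \<le> p" "p \<le> m" "1 \<le> q" "q \<le> 1"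
    have "p = i \<or> p = Suc i \<or> (p \<noteq> i \<and> p \<noteq> Suc i)" by arith
    then show "sparse_block_prod ?QB (neg_em_col_blocks n m r C) (\<lambda>p q. p) ?c2 p q
        = neg_em_col_blocks n m r C p q"
      using pq i C unfolding sparse_block_prod_def
      by (elim disjE) (simp_all add: Q_blocks_def neg_em_col_blocks_def)
  qed
  finally show ?thesis unfolding Qm_block_mat block_transpose_block_mat[OF n] .
qed

lemma em_row_mult_Qm:
  assumes i: "1 \<le> i" "i < m" and B: "B \<in> carrier_mat r n"
  shows "block_mat r n 1 m (neg_em_row_blocks n m r B) * Qm n m i
    = block_mat r n 1 m (neg_em_row_blocks n m r B)"
proof -
  have "block_mat r n 1 m (neg_em_row_blocks n m r B) * block_mat n n m m (Q_blocks n i)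
      = block_mat r n 1 m (sparse_block_prod (neg_em_row_blocks n m r B) (Q_blocks n i) (\<lambda>p q. m) (\<lambda>p q. i))"
    by (rule mult_block_mat_sparse) (use i B in \<open>auto simp: neg_em_row_blocks_def\<close>)
  also have "\<dots> = block_mat r n 1 m (neg_em_row_blocks n m r B)"
    using i B unfolding sparse_block_prod_def
    by (intro block_mat_cong) (simp add: Q_blocks_def neg_em_row_blocks_def)
  finally show ?thesis unfolding Qm_block_mat .
qed

lemma em_row_mult_fiedler_Rm:
  assumes i: "1 \<le> i" "i + 1 = m" and B: "B \<in> carrier_mat r n" and Y: "Y \<in> carrier_mat n n"
  shows "block_mat r n 1 m (neg_em_row_blocks n m r B) * block_mat n n m m (fiedler_blocks n Y i) * Rm n m A i
    = block_mat r n 1 m (neg_em_row_blocks n m r B)"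
proof -
  define V where "V = (\<lambda>(p::nat) (q::nat). if q = i then - cmat B else 0\<^sub>m r n)"
  have cV: "\<And>p q. V p q \<in> carrier_mat r n" using B by (simp add: V_def)
  then have dV: "\<And>p q. dim_row (V p q) = r" "\<And>p q. dim_col (V p q) = n" by auto
  have "block_mat r n 1 m (neg_em_row_blocks n m r B) * block_mat n n m m (fiedler_blocks n Y i)
      = block_mat r n 1 m (sparse_block_prod (neg_em_row_blocks n m r B) (fiedler_blocks n Y i)
          (\<lambda>p q. m) (\<lambda>p q. i))"
    by (rule mult_block_mat_sparse) (use i B Y in \<open>auto simp: neg_em_row_blocks_def\<close>)
  also have "\<dots> = block_mat r n 1 m V"
    using i B Y unfolding sparse_block_prod_def V_def
    by (intro block_mat_cong) (auto simp: fiedler_blocks_def neg_em_row_blocks_def)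
  finally have BF: "block_mat r n 1 m (neg_em_row_blocks n m r B) * block_mat n n m m (fiedler_blocks n Y i)
      = block_mat r n 1 m V" .
  let ?d1 = "\<lambda>p q::nat. if q = i \<or> q = i+1 then i+1 else q"
  have "block_mat r n 1 m V * block_mat n n m m (R_blocks n m A i)
      = block_mat r n 1 m (sparse_block_prod V (R_blocks n m A i) ?d1 (\<lambda>p q. i))"
    by (rule mult_block_mat_sparse)
      (use i cV dV in \<open>auto simp: R_blocks_zero R_blocks_diag_zero split: if_splits\<close>)
  also have "\<dots> = block_mat r n 1 m (neg_em_row_blocks n m r B)"
  proof (rule block_mat_cong)
    fix p q :: nat assume pq: "1 \<le> p" "p \<le> 1" "1 \<le> q" "q \<le> m"
    have "q = i \<or> q = Suc i \<or> (q \<noteq> i \<and> q \<noteq> Suc i)" by arith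
    then show "sparse_block_prod V (R_blocks n m A i) ?d1 (\<lambda>p q. i) p q = neg_em_row_blocks n m r B p q"
      using pq i B unfolding sparse_block_prod_def V_def
      by (elim disjE) (simp_all add: R_blocks_def neg_em_row_blocks_def)
  qed
  finally show ?thesis unfolding Rm_block_mat BF .
qed

lemma block_transpose_Rm_fiedler_em_col:
  assumes n: "0 < n" and i: "1 \<le> i" "i + 1 = m" and C: "C \<in> carrier_mat n r" and Y: "Y \<in> carrier_mat n n"
  shows "block_transpose n m (Rm n m A i)
      * (block_mat n n m m (fiedler_blocks n Y i) * block_mat n r m 1 (neg_em_col_blocks n m r C))
    = block_mat n r m 1 (neg_em_col_blocks n m r C)"
proof -
  define V where "V = (\<lambda>(p::nat) (q::nat). if p = i then - cmat C else 0\<^sub>m n r)"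
  have cV: "\<And>p q. V p q \<in> carrier_mat n r" using C by (simp add: V_def)
  then have dV: "\<And>p q. dim_row (V p q) = n" "\<And>p q. dim_col (V p q) = r" by auto
  let ?a1 = "\<lambda>p q::nat. if p = i+1 then i else p"
  let ?a2 = "\<lambda>p q::nat. if p = i \<or> p = i+1 then i+1 else i"
  have "block_mat n n m m (fiedler_blocks n Y i) * block_mat n r m 1 (neg_em_col_blocks n m r C)
      = block_mat n r m 1 (sparse_block_prod (fiedler_blocks n Y i) (neg_em_col_blocks n m r C) ?a1 ?a2)"
    by (rule mult_block_mat_sparse) (use i C Y in \<open>auto simp: fiedler_blocks_zero split: if_splits\<close>)
  also have "\<dots> = block_mat n r m 1 V"
  proof (rule block_mat_cong)
    fix p q :: nat assume pq: "1 \<le> p" "p \<le> m" "1 \<le> q" "q \<le> 1"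
    have "p = i \<or> p = Suc i \<or> (p \<noteq> i \<and> p \<noteq> Suc i)" by arith
    then show "sparse_block_prod (fiedler_blocks n Y i) (neg_em_col_blocks n m r C) ?a1 ?a2 p q = V p q"
      using pq i C Y unfolding sparse_block_prod_def V_def
      by (elim disjE) (simp_all add: fiedler_blocks_def neg_em_col_blocks_def)
  qed
  finally have FC: "block_mat n n m m (fiedler_blocks n Y i) * block_mat n r m 1 (neg_em_col_blocks n m r C)
      = block_mat n r m 1 V" .
  let ?RB = "\<lambda>p q. R_blocks n m A i q p"
  let ?c1 = "\<lambda>p q::nat. if p = i \<or> p = i+1 then i+1 else p"
  have "block_mat n n m m ?RB * block_mat n r m 1 V
      = block_mat n r m 1 (sparse_block_prod ?RB V ?c1 (\<lambda>p q. i))"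
    by (rule mult_block_mat_sparse) (use i cV dV in \<open>auto simp: R_blocks_zero split: if_splits\<close>)
  also have "\<dots> = block_mat n r m 1 (neg_em_col_blocks n m r C)"
  proof (rule block_mat_cong)
    fix p q :: nat assume pq: "1 \<le> p" "p \<le> m" "1 \<le> q" "q \<le> 1"
    have "p = i \<or> p = Suc i \<or> (p \<noteq> i \<and> p \<noteq> Suc i)" by arith
    then show "sparse_block_prod ?RB V ?c1 (\<lambda>p q. i) p q = neg_em_col_blocks n m r C p q"
      using pq i C unfolding sparse_block_prod_def V_def
      by (elim disjE) (simp_all add: R_blocks_def neg_em_col_blocks_def)
  qed
  finally show ?thesis unfolding Rm_block_mat block_transpose_block_mat[OF n] FC .
qed

section \<open>Matrices supported on two consecutive block rows and columns\<close>

lemma block_mat_mult_id_on_support: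
  fixes T G :: "nat \<Rightarrow> nat \<Rightarrow> complex poly mat"
  assumes cT: "\<And>p q. T p q \<in> carrier_mat n n" and cG: "\<And>p q. G p q \<in> carrier_mat n n"
    and T0: "\<And>p q. \<not> ((p = i \<or> p = i+1) \<and> (q = i \<or> q = i+1)) \<Longrightarrow> T p q = 0\<^sub>m n n"
    and G_rows: "\<And>q. G i q = (if q = i then 1\<^sub>m n else 0\<^sub>m n n)"
      "\<And>q. G (i+1) q = (if q = i+1 then 1\<^sub>m n else 0\<^sub>m n n)"
    and G_cols: "\<And>p. G p i = (if p = i then 1\<^sub>m n else 0\<^sub>m n n)"
      "\<And>p. G p (i+1) = (if p = i+1 then 1\<^sub>m n else 0\<^sub>m n n)"
    and i: "1 \<le> i" "i + 1 \<le> m"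
  shows "block_mat n n m m T * block_mat n n m m G = block_mat n n m m T"
    "block_mat n n m m G * block_mat n n m m T = block_mat n n m m T"
proof -
  have dT: "\<And>p q. dim_row (T p q) = n" "\<And>p q. dim_col (T p q) = n" using cT by auto
  have dG: "\<And>p q. dim_row (G p q) = n" "\<And>p q. dim_col (G p q) = n" using cG by auto
  have "block_mat n n m m T * block_mat n n m m G
      = block_mat n n m m (sparse_block_prod T G (\<lambda>p q. i) (\<lambda>p q. i+1))"
    by (rule mult_block_mat_sparse) (use i cT cG dT dG T0 in auto)
  also have "\<dots> = block_mat n n m m T"
  proof (rule block_mat_cong)
    fix p q :: nat
    have "q = i \<or> q = Suc i \<or> (q \<noteq> i \<and> q \<noteq> Suc i)" by arith
    then show "sparse_block_prod T G (\<lambda>p q. i) (\<lambda>p q. i+1) p q = T p q"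
      unfolding sparse_block_prod_def using dT cT T0[of p q] G_rows by (elim disjE) simp_all
  qed
  finally show "block_mat n n m m T * block_mat n n m m G = block_mat n n m m T" .
  have "block_mat n n m m G * block_mat n n m m T
      = block_mat n n m m (sparse_block_prod G T (\<lambda>p q. i) (\<lambda>p q. i+1))"
    by (rule mult_block_mat_sparse) (use i cT cG dT dG T0 in auto)
  also have "\<dots> = block_mat n n m m T"
  proof (rule block_mat_cong)
    fix p q :: nat
    have "p = i \<or> p = Suc i \<or> (p \<noteq> i \<and> p \<noteq> Suc i)" by arith
    then show "sparse_block_prod G T (\<lambda>p q. i) (\<lambda>p q. i+1) p q = T p q"
      unfolding sparse_block_prod_def using dT cT T0[of p q] G_cols by (elim disjE) simp_all
  qed
  finally show "block_mat n n m m G * block_mat n n m m T = block_mat n n m m T" .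
qed

lemma block_mat_mult_zero_on_support:
  fixes T :: "nat \<Rightarrow> nat \<Rightarrow> complex poly mat"
  assumes cT: "\<And>p q. T p q \<in> carrier_mat n n" and cV: "\<And>p q. V p q \<in> carrier_mat n r"
    and T0: "\<And>p q. \<not> ((p = i \<or> p = i+1) \<and> (q = i \<or> q = i+1)) \<Longrightarrow> T p q = 0\<^sub>m n n"
    and V0: "\<And>q. V i q = 0\<^sub>m n r" "\<And>q. V (i+1) q = 0\<^sub>m n r"
    and i: "1 \<le> i" "i + 1 \<le> m"
  shows "block_mat n n m m T * block_mat n r m 1 V = 0\<^sub>m (n*m) r"
proof -
  have dT: "\<And>p q. dim_row (T p q) = n" "\<And>p q. dim_col (T p q) = n" using cT by auto
  have dV: "\<And>p q. dim_row (V p q) = n" "\<And>p q. dim_col (V p q) = r" using cV by auto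
  have "block_mat n n m m T * block_mat n r m 1 V
      = block_mat n r m 1 (sparse_block_prod T V (\<lambda>p q. i) (\<lambda>p q. i+1))"
    by (rule mult_block_mat_sparse) (use i cT cV dT dV T0 in auto)
  also have "\<dots> = block_mat n r m 1 (\<lambda>p q. 0\<^sub>m n r)"
    using V0 by (intro block_mat_cong) (simp add: sparse_block_prod_def dT)
  finally show ?thesis by (simp add: block_mat_zero)
qed

lemma zero_on_support_mult_block_mat:
  fixes T :: "nat \<Rightarrow> nat \<Rightarrow> complex poly mat"
  assumes cT: "\<And>p q. T p q \<in> carrier_mat n n" and cV: "\<And>p q. V p q \<in> carrier_mat r n"
    and T0: "\<And>p q. \<not> ((p = i \<or> p = i+1) \<and> (q = i \<or> q = i+1)) \<Longrightarrow> T p q = 0\<^sub>m n n"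
    and V0: "\<And>p. V p i = 0\<^sub>m r n" "\<And>p. V p (i+1) = 0\<^sub>m r n"
    and i: "1 \<le> i" "i + 1 \<le> m"
  shows "block_mat r n 1 m V * block_mat n n m m T = 0\<^sub>m r (n*m)"
proof -
  have dT: "\<And>p q. dim_row (T p q) = n" "\<And>p q. dim_col (T p q) = n" using cT by auto
  have dV: "\<And>p q. dim_row (V p q) = r" "\<And>p q. dim_col (V p q) = n" using cV by auto
  have "block_mat r n 1 m V * block_mat n n m m T
      = block_mat r n 1 m (sparse_block_prod V T (\<lambda>p q. i) (\<lambda>p q. i+1))"
    by (rule mult_block_mat_sparse) (use i cT cV dT dV T0 in auto)
  also have "\<dots> = block_mat r n 1 m (\<lambda>p q. 0\<^sub>m r n)"
    using V0 by (intro block_mat_cong) (simp add: sparse_block_prod_def dT)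
  finally show ?thesis by (simp add: block_mat_zero)
qed

lemma fiedler_blocks_id_near:
  assumes "i + 2 \<le> t"
  shows "\<And>q. fiedler_blocks n X t i q = (if q = i then 1\<^sub>m n else 0\<^sub>m n n)"
    "\<And>q. fiedler_blocks n X t (i+1) q = (if q = i+1 then 1\<^sub>m n else 0\<^sub>m n n)"
    "\<And>p. fiedler_blocks n X t p i = (if p = i then 1\<^sub>m n else 0\<^sub>m n n)"
    "\<And>p. fiedler_blocks n X t p (i+1) = (if p = i+1 then 1\<^sub>m n else 0\<^sub>m n n)"
  using assms by (auto simp: fiedler_blocks_def)

section \<open>The identities for the system matrices\<close>

lemma Qm_Rm_Tm_Dm_dims[simp]:
  "dim_row (Qm n m i) = n*m" "dim_col (Qm n m i) = n*m"
  "dim_row (Rm n m A i) = n*m" "dim_col (Rm n m A i) = n*m"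
  "dim_row (Tm n m A i) = n*m" "dim_col (Tm n m A i) = n*m"
  "dim_row (Dm n m A i) = n*m" "dim_col (Dm n m A i) = n*m"
  by (simp_all add: Qm_block_mat Rm_block_mat Tm_block_mat Dm_block_mat)

lemma QcalB_Dcal_Rcal:
  assumes n: "0 < n" and i: "1 \<le> i" "i \<le> m - 1" and E: "E \<in> carrier_mat r r"
  shows "QcalB n m r i * (lam \<cdot>\<^sub>m Dcal n m r A E i) * Rcal n m r A i
    = lam \<cdot>\<^sub>m Dcal n m r A E (i + 1) + Tcal n m r A i"
  using E unfolding QcalB_def Dcal_def Rcal_def Tcal_def sys_bt_diag_eq_diag2
  by (simp add: smult_diag2 mult_diag2 add_diag2 block_transpose_Qm_Dm_Rm[OF n i])

lemma RcalB_Dcal_Qcal: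
  assumes n: "0 < n" and i: "1 \<le> i" "i \<le> m - 1" and E: "E \<in> carrier_mat r r"
  shows "RcalB n m r A i * (lam \<cdot>\<^sub>m Dcal n m r A E i) * Qcal n m r i
    = lam \<cdot>\<^sub>m Dcal n m r A E (i + 1) + TcalB n m r A i"
  using E unfolding RcalB_def Dcal_def Qcal_def TcalB_def sys_bt_diag_eq_diag2
  by (simp add: smult_diag2 mult_diag2 add_diag2 block_transpose_Rm_Dm_Qm[OF n i])

lemma QcalB_sys_fiedler_Rcal:
  fixes E :: "complex mat"
  assumes n: "0 < n" and A: "\<And>j. j \<le> m \<Longrightarrow> A j \<in> carrier_mat n n"
    and Amat: "Amat \<in> carrier_mat r r" and B: "B \<in> carrier_mat r n" and C: "C \<in> carrier_mat n r"
    and i: "1 \<le> i" "i + 1 \<le> m"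
  defines "MM \<equiv> sys_fiedler n m r A Amat E B C"
  shows "QcalB n m r i * (MM (m - (i + 1)) * MM (m - i)) * Rcal n m r A i
    = MM (m - (i + 1)) + Tcal n m r A i"
proof -
  let ?F = "block_mat n n m m (fiedler_blocks n (A (m - (i+1))) (i+1))"
  let ?G = "block_mat n n m m (fiedler_blocks n (A (m - i)) i)"
  have Mi: "MM (m - i) = diag2 (n*m) r ?G (1\<^sub>m r)"
    unfolding MM_def using i A by (subst sys_fiedler_mid) auto
  have poly: "block_transpose n m (Qm n m i) * (?F * ?G) * Rm n m A i = ?F + Tm n m A i"
    using i A by (intro block_transpose_Qm_fiedler_Rm n) auto
  show ?thesis
  proof (cases "i + 1 < m")
    case True
    then have "MM (m - (i + 1)) = diag2 (n*m) r ?F (1\<^sub>m r)"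
      unfolding MM_def using A by (subst sys_fiedler_mid) auto
    then show ?thesis
      unfolding QcalB_def Rcal_def Tcal_def sys_bt_diag_eq_diag2 Mi using poly
      by (simp add: mult_diag2 add_diag2)
  next
    case False
    then have m: "m = i + 1" using i by simp
    have "MM (m - (i + 1)) = four_block_mat ?F (block_mat n r m 1 (neg_em_col_blocks n m r C))
        (block_mat r n 1 m (neg_em_row_blocks n m r B)) (- cmat Amat)"
      unfolding MM_def using sys_fiedler_zero[of m A n C r B Amat E] A Amat B C m by simp
    moreover have "block_transpose n m (Qm n m i) * block_mat n r m 1 (neg_em_col_blocks n m r C)
        = block_mat n r m 1 (neg_em_col_blocks n m r C)"
      using i C by (intro block_transpose_Qm_mult_em_col n) auto
    moreover have "block_mat r n 1 m (neg_em_row_blocks n m r B) * ?G * Rm n m A i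
        = block_mat r n 1 m (neg_em_row_blocks n m r B)"
      using i B A m by (intro em_row_mult_fiedler_Rm) auto
    moreover have "dim_row Amat = r" "dim_col Amat = r" "- cmat Amat \<in> carrier_mat r r" using Amat by auto
    ultimately show ?thesis
      unfolding QcalB_def Rcal_def Tcal_def sys_bt_diag_eq_diag2 Mi using poly
      by (simp add: four_block_mat_mult_diag2 diag2_mult_four_block_mat four_block_mat_add_diag2)
  qed
qed

lemma RcalB_sys_fiedler_Qcal:
  fixes E :: "complex mat"
  assumes n: "0 < n" and A: "\<And>j. j \<le> m \<Longrightarrow> A j \<in> carrier_mat n n"
    and Amat: "Amat \<in> carrier_mat r r" and B: "B \<in> carrier_mat r n" and C: "C \<in> carrier_mat n r"
    and i: "1 \<le> i" "i + 1 \<le> m"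
  defines "MM \<equiv> sys_fiedler n m r A Amat E B C"
  shows "RcalB n m r A i * (MM (m - i) * MM (m - (i + 1))) * Qcal n m r i
    = MM (m - (i + 1)) + TcalB n m r A i"
proof -
  let ?F = "block_mat n n m m (fiedler_blocks n (A (m - (i+1))) (i+1))"
  let ?G = "block_mat n n m m (fiedler_blocks n (A (m - i)) i)"
  have Mi: "MM (m - i) = diag2 (n*m) r ?G (1\<^sub>m r)"
    unfolding MM_def using i A by (subst sys_fiedler_mid) auto
  have poly: "block_transpose n m (Rm n m A i) * (?G * ?F) * Qm n m i
      = ?F + block_transpose n m (Tm n m A i)"
    using i A by (intro block_transpose_Rm_fiedler_Qm n) auto
  show ?thesis
  proof (cases "i + 1 < m")
    case True
    then have "MM (m - (i + 1)) = diag2 (n*m) r ?F (1\<^sub>m r)"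
      unfolding MM_def using A by (subst sys_fiedler_mid) auto
    then show ?thesis
      unfolding RcalB_def Qcal_def TcalB_def sys_bt_diag_eq_diag2 Mi using poly
      by (simp add: mult_diag2 add_diag2)
  next
    case False
    then have m: "m = i + 1" using i by simp
    have "MM (m - (i + 1)) = four_block_mat ?F (block_mat n r m 1 (neg_em_col_blocks n m r C))
        (block_mat r n 1 m (neg_em_row_blocks n m r B)) (- cmat Amat)"
      unfolding MM_def using sys_fiedler_zero[of m A n C r B Amat E] A Amat B C m by simp
    moreover have "block_mat r n 1 m (neg_em_row_blocks n m r B) * Qm n m i
        = block_mat r n 1 m (neg_em_row_blocks n m r B)"
      using i B by (intro em_row_mult_Qm) auto
    moreover have "block_transpose n m (Rm n m A i) * (?G * block_mat n r m 1 (neg_em_col_blocks n m r C))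
        = block_mat n r m 1 (neg_em_col_blocks n m r C)"
      using i C A m by (intro block_transpose_Rm_fiedler_em_col n) auto
    moreover have "dim_row Amat = r" "dim_col Amat = r" "- cmat Amat \<in> carrier_mat r r" using Amat by auto
    ultimately show ?thesis
      unfolding RcalB_def Qcal_def TcalB_def sys_bt_diag_eq_diag2 Mi using poly
      by (simp add: four_block_mat_mult_diag2 diag2_mult_four_block_mat four_block_mat_add_diag2)
  qed
qed

lemma sys_fiedler_absorbs_supported:
  fixes E :: "complex mat" and T :: "nat \<Rightarrow> nat \<Rightarrow> complex poly mat"
  assumes A: "\<And>j. j \<le> m \<Longrightarrow> A j \<in> carrier_mat n n"
    and Amat: "Amat \<in> carrier_mat r r" and B: "B \<in> carrier_mat r n" and C: "C \<in> carrier_mat n r"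
    and cT: "\<And>p q. T p q \<in> carrier_mat n n"
    and T0: "\<And>p q. \<not> ((p = i \<or> p = i+1) \<and> (q = i \<or> q = i+1)) \<Longrightarrow> T p q = 0\<^sub>m n n"
    and i: "1 \<le> i" and j: "j + i + 2 \<le> m"
  defines "MM \<equiv> sys_fiedler n m r A Amat E B C"
    and "TT \<equiv> diag2 (n*m) r (block_mat n n m m T) (0\<^sub>m r r)"
  shows "TT * MM j = TT \<and> MM j * TT = TT"
proof -
  let ?G = "block_mat n n m m (fiedler_blocks n (A j) (m - j))"
  have i': "1 \<le> i" "i + 1 \<le> m" using i j by auto
  have cG: "\<And>p q. fiedler_blocks n (A j) (m - j) p q \<in> carrier_mat n n" using A j by simp
  have near: "i + 2 \<le> m - j" using j by simp
  note TG = block_mat_mult_id_on_support[OF cT cG T0 fiedler_blocks_id_near[OF near] i']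
  show ?thesis
  proof (cases "j = 0")
    case False
    then have "MM j = diag2 (n*m) r ?G (1\<^sub>m r)"
      unfolding MM_def using A j by (subst sys_fiedler_mid) auto
    then show ?thesis unfolding TT_def using TG by (simp add: mult_diag2)
  next
    case True
    have "MM j = four_block_mat ?G (block_mat n r m 1 (neg_em_col_blocks n m r C))
        (block_mat r n 1 m (neg_em_row_blocks n m r B)) (- cmat Amat)"
      unfolding MM_def True using sys_fiedler_zero[of m A n C r B Amat E] A Amat B C j by simp
    moreover have "block_mat n n m m T * block_mat n r m 1 (neg_em_col_blocks n m r C) = 0\<^sub>m (n*m) r"
      using j C
      by (intro block_mat_mult_zero_on_support[OF cT _ T0 _ _ i']) (auto simp: neg_em_col_blocks_def)
    moreover have "block_mat r n 1 m (neg_em_row_blocks n m r B) * block_mat n n m m T = 0\<^sub>m r (n*m)"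
      using j B
      by (intro zero_on_support_mult_block_mat[OF cT _ T0 _ _ i']) (auto simp: neg_em_row_blocks_def)
    moreover have "dim_row Amat = r" "dim_col Amat = r" using Amat by auto
    ultimately show ?thesis unfolding TT_def using TG
      by (simp add: diag2_mult_four_block_mat four_block_mat_mult_diag2) (simp add: diag2_def)
  qed
qed

lemma Tcal_TcalB_sys_fiedler_absorb:
  fixes E :: "complex mat"
  assumes n: "0 < n" and A: "\<And>j. j \<le> m \<Longrightarrow> A j \<in> carrier_mat n n"
    and Amat: "Amat \<in> carrier_mat r r" and B: "B \<in> carrier_mat r n" and C: "C \<in> carrier_mat n r"
    and i: "1 \<le> i" and j: "j + i + 2 \<le> m"
  defines "MM \<equiv> sys_fiedler n m r A Amat E B C"
  shows "Tcal n m r A i * MM j = Tcal n m r A i \<and> MM j * Tcal n m r A i = Tcal n m r A i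
    \<and> TcalB n m r A i * MM j = TcalB n m r A i \<and> MM j * TcalB n m r A i = TcalB n m r A i"
proof -
  have T0: "\<And>p q. \<not> ((p = i \<or> p = i+1) \<and> (q = i \<or> q = i+1)) \<Longrightarrow> T_blocks n m A i p q = 0\<^sub>m n n"
    "\<And>p q. \<not> ((p = i \<or> p = i+1) \<and> (q = i \<or> q = i+1)) \<Longrightarrow> T_blocks n m A i q p = 0\<^sub>m n n"
    by (rule T_blocks_zero, blast)+
  have "Tcal n m r A i = diag2 (n*m) r (block_mat n n m m (T_blocks n m A i)) (0\<^sub>m r r)"
    by (simp add: Tcal_def Tm_block_mat)
  moreover have "TcalB n m r A i
      = diag2 (n*m) r (block_mat n n m m (\<lambda>p q. T_blocks n m A i q p)) (0\<^sub>m r r)"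
    by (simp add: TcalB_def sys_bt_diag_eq_diag2 Tm_block_mat block_transpose_block_mat[OF n])
  moreover note sys_fiedler_absorbs_supported[OF A Amat B C _ T0(1) i j, where E = E]
    sys_fiedler_absorbs_supported[OF A Amat B C _ T0(2) i j, where E = E]
  ultimately show ?thesis unfolding MM_def by simp
qed

lemma dim_pos_of_nonzero: "X \<in> carrier_mat n n \<Longrightarrow> X \<noteq> 0\<^sub>m n n \<Longrightarrow> 0 < n"
  by (cases n) (auto intro!: eq_matI)

theorem lemma4p10:
  fixes n m r i :: nat and A :: "nat \<Rightarrow> complex mat"
    and Amat E B C :: "complex mat"
  assumes hA: "\<And>j. j \<le> m \<Longrightarrow> A j \<in> carrier_mat n n"
    and hAm: "A m \<noteq> 0\<^sub>m n n"
    and hAmat: "Amat \<in> carrier_mat r r" and hE: "E \<in> carrier_mat r r"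
    and hB: "B \<in> carrier_mat r n" and hC: "C \<in> carrier_mat n r"
    and hi: "1 \<le> i" "i \<le> m - 1"
  defines "MM \<equiv> sys_fiedler n m r A Amat E B C"
  shows
    "(QcalB n m r i * (lam \<cdot>\<^sub>m Dcal n m r A E i) * Rcal n m r A i
        = lam \<cdot>\<^sub>m Dcal n m r A E (i + 1) + Tcal n m r A i
     \<and> QcalB n m r i * (MM (m - (i + 1)) * MM (m - i)) * Rcal n m r A i
        = MM (m - (i + 1)) + Tcal n m r A i)
   \<and> (RcalB n m r A i * (lam \<cdot>\<^sub>m Dcal n m r A E i) * Qcal n m r i
        = lam \<cdot>\<^sub>m Dcal n m r A E (i + 1) + TcalB n m r A i
     \<and> RcalB n m r A i * (MM (m - i) * MM (m - (i + 1))) * Qcal n m r i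
        = MM (m - (i + 1)) + TcalB n m r A i)
   \<and> (\<forall>j. j + i + 2 \<le> m \<longrightarrow>
        Tcal n m r A i * MM j = Tcal n m r A i \<and> MM j * Tcal n m r A i = Tcal n m r A i
      \<and> TcalB n m r A i * MM j = TcalB n m r A i \<and> MM j * TcalB n m r A i = TcalB n m r A i)"
proof -
  have n: "0 < n" using dim_pos_of_nonzero hA[of m] hAm by blast
  have i: "1 \<le> i" "i + 1 \<le> m" using hi by auto
  have "QcalB n m r i * (MM (m - (i + 1)) * MM (m - i)) * Rcal n m r A i
      = MM (m - (i + 1)) + Tcal n m r A i"
    unfolding MM_def using n hA hAmat hB hC i by (rule QcalB_sys_fiedler_Rcal)
  moreover have "RcalB n m r A i * (MM (m - i) * MM (m - (i + 1))) * Qcal n m r i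
      = MM (m - (i + 1)) + TcalB n m r A i"
    unfolding MM_def using n hA hAmat hB hC i by (rule RcalB_sys_fiedler_Qcal)
  moreover have "\<forall>j. j + i + 2 \<le> m \<longrightarrow>
        Tcal n m r A i * MM j = Tcal n m r A i \<and> MM j * Tcal n m r A i = Tcal n m r A i
      \<and> TcalB n m r A i * MM j = TcalB n m r A i \<and> MM j * TcalB n m r A i = TcalB n m r A i"
    unfolding MM_def using Tcal_TcalB_sys_fiedler_absorb[where A = A and m = m and E = E]
      n hA hAmat hB hC hi(1) by blast
  ultimately show ?thesis
    using QcalB_Dcal_Rcal[OF n hi hE] RcalB_Dcal_Qcal[OF n hi hE] by blast
qed

end
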